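(* Let $\mathcal M=\{1,\dots,M\}$, $\mathcal N=\{1,\dots,N\}$, let $\{\mathbf v_n\}_{n\in\mathcal N}$, $\mathbf v_n=(v_{1n},\dots,v_{Mn})\in\mathbb R^M$, be (announced) value vectors, and let $\epsilon>0$. Let $\Phi$ be the matching output by the Distributed Matching Algorithm (DMA) described in the context, run with these values. Then for every D2D pair $n\in\mathcal N$, $$\delta_n(\Phi)\le V(\mathcal M,\mathcal N)-V(\mathcal M,\mathcal N\setminus\{n\})+4C_1\epsilon,$$ $$\delta_n(\Phi)\ge V(\mathcal M,\mathcal N)-V(\mathcal M,\mathcal N\setminus\{n\})-(C_1+C_2+1)\epsilon,$$ where $C_1=\min\{M,N-1\}$ and $C_2=\min\{M,N\}$.
   Context: For $\mathcal M_1\subseteq\mathcal M$, $\mathcal N_1\subseteq\mathcal N$, $V(\mathcal M_1,\mathcal N_1)$ is the maximum of $\sum_{m\in\mathcal M_1,n\in\mathcal N_1}x_{mn}v_{mn}$ over $x_{mn}\in\{0,1\}$ with each $m$ and each $n$ in at most one pair. A matching is $\Phi=(\mu,\mathbf p)$ where $\mu$ is a one-to-one mapping ($\mu(m)\in\mathcal N\cup\{0\}$, $\mu(n)\in\mathcal M\cup\{0\}$, $\mu(m)=n\iff\mu(n)=m$, 0 = unmatched) and $p_m\ge0$ with $p_m=0$ if $\mu(m)=0$; $\delta_n(\Phi)=v_{\mu(n)n}-p_{\mu(n)}$ with $p_0=0$, $v_{0n}=0$. DMA: demand function $D_n(\boldsymbol\beta)=\arg\max_{m}(v_{mn}-\beta_m)$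 if $\max_m(v_{mn}-\beta_m)\ge0$, else $0$ (no ties assumed). Initialize $t=1$, $p_m=\beta^1_m=0$, all CUs unmatched. Iteration $t$: (i) each unmatched D2D pair $n$ computes $m=D_n(\boldsymbol\beta^t)$; if $m\ne0$ it proposes to CU $m$ ($g^t_{mn}=1$), else it makes no proposal and stays unmatched. (ii) For each CU $m$: if $\sum_ng^t_{mn}=0$, $\sum_ng^{t-1}_{mn}>0$ and $m$ is unmatched, match $m$ to a random $n^*$ with $g^{t-1}_{mn^*}=1$, set $p_m=\beta^{t-1}_m$, $\beta^{t+1}_m=\beta^t_m$, and set $g^t_{m^*n^*}=0$ for $m^*=D_{n^*}(\boldsymbol\beta^t)$. (iii) For each CU $m$: if $\sum_ng^t_{mn}=1$ and ($m$ was unmatched at $t-1$ or $p_m<\beta^t_m$), match $m$ to the proposer, set $p_m=\beta^t_m$, $\beta^{t+1}_m=\beta^t_m$; else if $\sum_ng^t_{mn}\ge1$, make $m$ unmatched, and if its previous partner $n\ne0$ had $p_m=\beta^t_m$ set $g^t_{mn}=1$, and set $\beta^{t+1}_m=\beta^t_m+\epsilon$; otherwise $\beta^{t+1}_m=\beta^t_m$. (iv) $t\leftarrow t+1$; stop when an iteration has no proposal; output $(\mu,\mathbf p)$. *)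

theory Defs
  imports Complex_Main
begin

text \<open>CUs are indexed by {1..M}, D2D pairs by {1..N}; the index 0 means "unmatched".
  Values: v m n is the value of D2D pair n for CU m.\<close>

definition Vopt :: "(nat \<Rightarrow> nat \<Rightarrow> real) \<Rightarrow> nat set \<Rightarrow> nat set \<Rightarrow> real" where
  "Vopt v M1 N1 = Max {(\<Sum>(m,n)\<in>X. v m n) | X. X \<subseteq> M1 \<times> N1 \<and>
      (\<forall>(m,n)\<in>X. \<forall>(m',n')\<in>X. (m = m' \<longleftrightarrow> n = n'))}"

definition demand :: "nat \<Rightarrow> (nat \<Rightarrow> nat \<Rightarrow> real) \<Rightarrow> (nat \<Rightarrow> real) \<Rightarrow> nat \<Rightarrow> nat" where
  "demand M v \<beta> n = (if \<exists>m\<in>{1..M}. v m n - \<beta> m \<ge> 0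
     then (SOME m. m \<in> {1..M} \<and> (\<forall>m'\<in>{1..M}. v m' n - \<beta> m' \<le> v m n - \<beta> m))
     else 0)"

definition no_ties :: "nat \<Rightarrow> nat \<Rightarrow> (nat \<Rightarrow> nat \<Rightarrow> real) \<Rightarrow> (nat \<Rightarrow> real) \<Rightarrow> bool" where
  "no_ties M N v \<beta> \<longleftrightarrow> (\<forall>n\<in>{1..N}. \<forall>m\<in>{1..M}. \<forall>m'\<in>{1..M}.
      (\<forall>k\<in>{1..M}. v k n - \<beta> k \<le> v m n - \<beta> m) \<longrightarrow>
      (\<forall>k\<in>{1..M}. v k n - \<beta> k \<le> v m' n - \<beta> m') \<longrightarrow> m = m')"

text \<open>State at the start of iteration t: partner of each CU (0 = unmatched), prices p,
  current bids beta^t, previous bids beta^(t-1), previous proposals g^(t-1).\<close>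
record dma_state =
  dma_mu :: "nat \<Rightarrow> nat"
  dma_price :: "nat \<Rightarrow> real"
  dma_beta :: "nat \<Rightarrow> real"
  dma_bprev :: "nat \<Rightarrow> real"
  dma_gprev :: "nat \<Rightarrow> nat \<Rightarrow> bool"

definition dma_init :: dma_state where
  "dma_init = \<lparr> dma_mu = (\<lambda>_. 0), dma_price = (\<lambda>_. 0), dma_beta = (\<lambda>_. 0),
     dma_bprev = (\<lambda>_. 0), dma_gprev = (\<lambda>_ _. False) \<rparr>"

definition d2d_unmatched :: "nat \<Rightarrow> dma_state \<Rightarrow> nat \<Rightarrow> bool" where
  "d2d_unmatched M s n \<longleftrightarrow> (\<forall>m\<in>{1..M}. dma_mu s m \<noteq> n)"

definition proposals :: "nat \<Rightarrow> nat \<Rightarrow> (nat \<Rightarrow> nat \<Rightarrow> real) \<Rightarrow> dma_state \<Rightarrow> nat \<Rightarrow> nat \<Rightarrow> bool" where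
  "proposals M N v s m n \<longleftrightarrow> n \<in> {1..N} \<and> d2d_unmatched M s n \<and> m \<noteq> 0 \<and>
      demand M v (dma_beta s) n = m"

definition has_proposal :: "nat \<Rightarrow> nat \<Rightarrow> (nat \<Rightarrow> nat \<Rightarrow> real) \<Rightarrow> dma_state \<Rightarrow> bool" where
  "has_proposal M N v s \<longleftrightarrow> (\<exists>m n. proposals M N v s m n)"

text \<open>One iteration (steps (i)-(iii)) of the DMA; nondeterministic because of the random
  choice in step (ii) (the function sel).\<close>
definition dma_iter :: "nat \<Rightarrow> nat \<Rightarrow> (nat \<Rightarrow> nat \<Rightarrow> real) \<Rightarrow> real \<Rightarrow> dma_state \<Rightarrow> dma_state \<Rightarrow> bool" where
  "dma_iter M N v eps s s' \<longleftrightarrow>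
    (let CU = {1..M}; DP = {1..N}; \<beta> = dma_beta s;
         g1 = proposals M N v s;
         A = {m \<in> CU. card {n \<in> DP. g1 m n} = 0 \<and> (\<exists>n\<in>DP. dma_gprev s m n) \<and> dma_mu s m = 0}
     in \<exists>sel. (\<forall>m\<in>A. sel m \<in> DP \<and> dma_gprev s m (sel m)) \<and>
       (let g2 = (\<lambda>m n. g1 m n \<and> n \<notin> sel ` A);
            c2 = (\<lambda>m. card {n \<in> DP. g2 m n});
            win = (\<lambda>m. m \<in> CU \<and> m \<notin> A \<and> c2 m = 1 \<and>
                        (dma_mu s m = 0 \<or> dma_price s m < \<beta> m));
            lose = (\<lambda>m. m \<in> CU \<and> m \<notin> A \<and> \<not> win m \<and> c2 m \<ge> 1)
        in s' = \<lparr> dma_mu = (\<lambda>m. if m \<in> A then sel m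
                              else if win m then (THE n. n \<in> DP \<and> g2 m n)
                              else if lose m then 0 else dma_mu s m),
                  dma_price = (\<lambda>m. if m \<in> A then dma_bprev s m
                                 else if win m then \<beta> m else dma_price s m),
                  dma_beta = (\<lambda>m. if lose m then \<beta> m + eps else \<beta> m),
                  dma_bprev = \<beta>,
                  dma_gprev = (\<lambda>m n. g2 m n \<or> (lose m \<and> dma_mu s m \<noteq> 0 \<and> n = dma_mu s m
                                                 \<and> dma_price s m = \<beta> m)) \<rparr>))"

inductive dma_reach :: "nat \<Rightarrow> nat \<Rightarrow> (nat \<Rightarrow> nat \<Rightarrow> real) \<Rightarrow> real \<Rightarrow> dma_state \<Rightarrow> bool"
  for M N v eps where
  init: "dma_reach M N v eps dma_init"
| step: "dma_reach M N v eps s \<Longrightarrow> has_proposal M N v s \<Longrightarrow> dma_iter M N v eps s s' \<Longrightarrow>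
         dma_reach M N v eps s'"

definition dma_output :: "nat \<Rightarrow> nat \<Rightarrow> (nat \<Rightarrow> nat \<Rightarrow> real) \<Rightarrow> real \<Rightarrow> dma_state \<Rightarrow> bool" where
  "dma_output M N v eps s \<longleftrightarrow>
     (\<exists>s0. dma_reach M N v eps s0 \<and> \<not> has_proposal M N v s0 \<and> dma_iter M N v eps s0 s)"

definition dma_delta :: "nat \<Rightarrow> (nat \<Rightarrow> nat \<Rightarrow> real) \<Rightarrow> dma_state \<Rightarrow> nat \<Rightarrow> real" where
  "dma_delta M v s n = (if \<exists>m\<in>{1..M}. dma_mu s m = n
     then (let m = (SOME m. m \<in> {1..M} \<and> dma_mu s m = n) in v m n - dma_price s m)
     else 0)"

end

theory Submission
  imports Defs "HOL-Library.Transitive_Closure_Table"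
begin

text \<open>The DMA is an \<open>\<epsilon>\<close>-auction. Along every run it keeps an invariant: the matching is
  one-to-one, each matched CU is demanded up to \<open>\<epsilon>\<close> by its partner at the current bids, prices
  lag bids by at most \<open>\<epsilon>\<close>, and every nonempty set \<open>S\<close> of CUs with positive bids is
  \<open>\<epsilon>\<close>-demanded by at least \<open>|S| + 1\<close> D2D pairs. At termination every CU with a positive
  bid is matched and unmatched D2D pairs want no CU, so the utilities \<open>\<delta>\<close> and the prices
  form an \<open>\<epsilon>\<close>-feasible dual solution of the assignment problem whose value is that of the
  output matching. Weak duality on \<open>\<N>\<close> and on \<open>\<N> - {n}\<close> bounds \<open>\<delta>\<^sub>n\<close> from
  above. For the lower bound, the surplus condition provides an alternating path from the
  partner of \<open>n\<close> to a CU with zero bid or a free \<open>\<epsilon>\<close>-demanded D2D pair; shifting the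
  matching along it gives an \<open>\<epsilon>\<close>-optimal matching that avoids \<open>n\<close>.\<close>

section \<open>The assignment problem\<close>

definition matching :: "('a \<times> 'b) set \<Rightarrow> bool" where
  "matching X \<longleftrightarrow> (\<forall>(m,n)\<in>X. \<forall>(m',n')\<in>X. (m = m' \<longleftrightarrow> n = n'))"

lemma Vopt_eq_Max_matching:
  "Vopt v M1 N1 = Max {(\<Sum>(m,n)\<in>X. v m n) | X. X \<subseteq> M1 \<times> N1 \<and> matching X}"
  unfolding Vopt_def matching_def by simp

lemma finite_matching_values:
  assumes "finite M1" "finite N1"
  shows "finite {(\<Sum>(m,n)\<in>X. v m n) | X. X \<subseteq> M1 \<times> N1 \<and> matching X} \<and>
         {(\<Sum>(m,n)\<in>X. v m n) | X. X \<subseteq> M1 \<times> N1 \<and> matching X} \<noteq> {}"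
proof -
  have image: "{(\<Sum>(m,n)\<in>X. v m n) | X. X \<subseteq> M1 \<times> N1 \<and> matching X} =
      (\<lambda>X. \<Sum>(m,n)\<in>X. v m n) ` {X. X \<subseteq> M1 \<times> N1 \<and> matching X}" by blast
  have "{X. X \<subseteq> M1 \<times> N1 \<and> matching X} \<subseteq> Pow (M1 \<times> N1)" by blast
  then have "finite {X. X \<subseteq> M1 \<times> N1 \<and> matching X}" using assms finite_subset by blast
  moreover have "{} \<in> {X. X \<subseteq> M1 \<times> N1 \<and> matching X}" unfolding matching_def by blast
  ultimately show ?thesis unfolding image by blast
qed

lemma sum_matching_le_Vopt:
  assumes "finite M1" "finite N1" "X \<subseteq> M1 \<times> N1" "matching X"
  shows "(\<Sum>(m,n)\<in>X. v m n) \<le> Vopt v M1 N1"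
  unfolding Vopt_eq_Max_matching using finite_matching_values[OF assms(1,2)] assms(3,4)
  by (intro Max_ge) blast+

lemma sum_assignment_le_Vopt:
  assumes "finite M1" "finite N1" "S \<subseteq> M1" "\<phi> ` S \<subseteq> N1" "inj_on \<phi> S"
  shows "(\<Sum>m\<in>S. v m (\<phi> m)) \<le> Vopt v M1 N1"
proof -
  let ?X = "(\<lambda>m. (m, \<phi> m)) ` S"
  have "matching ?X"
    using assms(5) unfolding matching_def inj_on_def by blast
  moreover have "?X \<subseteq> M1 \<times> N1" using assms(3,4) by blast
  moreover have "(\<Sum>(m,n)\<in>?X. v m n) = (\<Sum>m\<in>S. v m (\<phi> m))"
    by (subst sum.reindex) (auto intro: inj_onI)
  ultimately show ?thesis
    using sum_matching_le_Vopt[OF assms(1,2)] by metis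
qed

lemma matching_inj_on_fst: "matching X \<Longrightarrow> inj_on fst X"
  and matching_inj_on_snd: "matching X \<Longrightarrow> inj_on snd X"
  unfolding matching_def inj_on_def by fastforce+

lemma card_matching_le:
  assumes "matching X" "X \<subseteq> C \<times> B" "finite C" "finite B"
  shows "card X \<le> min (card C) (card B)"
proof -
  have "card X = card (fst ` X)" "card X = card (snd ` X)"
    using card_image matching_inj_on_fst matching_inj_on_snd assms(1) by metis+
  moreover have "card (fst ` X) \<le> card C" "card (snd ` X) \<le> card B"
    using assms(2-4) by (intro card_mono; force)+
  ultimately show ?thesis by simp
qed

lemma sum_matching_le_dual:
  fixes v :: "'a \<Rightarrow> 'b \<Rightarrow> real"
  assumes X: "X \<subseteq> C \<times> B" "matching X" and fin: "finite C" "finite B"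
    and dual: "\<And>m k. m \<in> C \<Longrightarrow> k \<in> B \<Longrightarrow> v m k \<le> u k + q m + e"
    and u: "\<And>k. k \<in> B \<Longrightarrow> 0 \<le> u k" and q: "\<And>m. m \<in> C \<Longrightarrow> 0 \<le> q m"
  shows "(\<Sum>(m,k)\<in>X. v m k) \<le> sum u B + sum q C + real (card X) * e"
proof -
  have "(\<Sum>(m,k)\<in>X. v m k) \<le> (\<Sum>x\<in>X. u (snd x) + q (fst x) + e)"
    using X(1) dual by (intro sum_mono) auto
  also have "\<dots> = sum u (snd ` X) + sum q (fst ` X) + real (card X) * e"
    using X(2) by (simp add: sum.distrib sum.reindex matching_inj_on_fst matching_inj_on_snd)
  also have "\<dots> \<le> sum u B + sum q C + real (card X) * e"
    using X(1) fin u q by (intro add_mono sum_mono2) auto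
  finally show ?thesis .
qed

lemma Vopt_le_dual:
  assumes fin: "finite C" "finite B" and "0 \<le> e"
    and dual: "\<And>m k. m \<in> C \<Longrightarrow> k \<in> B \<Longrightarrow> v m k \<le> u k + q m + e"
    and u: "\<And>k. k \<in> B \<Longrightarrow> 0 \<le> u k" and q: "\<And>m. m \<in> C \<Longrightarrow> 0 \<le> q m"
  shows "Vopt v C B \<le> sum u B + sum q C + real (min (card C) (card B)) * e"
proof -
  have bound: "(\<Sum>(m,k)\<in>X. v m k) \<le> sum u B + sum q C + real (min (card C) (card B)) * e"
    if X: "X \<subseteq> C \<times> B" "matching X" for X
  proof -
    have "real (card X) * e \<le> real (min (card C) (card B)) * e"
      using card_matching_le[OF X(2,1) fin] \<open>0 \<le> e\<close> by (intro mult_right_mono) auto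
    moreover have "(\<Sum>(m,k)\<in>X. v m k) \<le> sum u B + sum q C + real (card X) * e"
      by (rule sum_matching_le_dual[OF X fin]) (use dual u q in auto)
    ultimately show ?thesis by linarith
  qed
  show ?thesis
    unfolding Vopt_eq_Max_matching
  proof (rule Max.boundedI)
    show "finite {(\<Sum>(m,n)\<in>X. v m n) | X. X \<subseteq> C \<times> B \<and> matching X}"
      and "{(\<Sum>(m,n)\<in>X. v m n) | X. X \<subseteq> C \<times> B \<and> matching X} \<noteq> {}"
      using finite_matching_values[OF fin] by blast+
  qed (use bound in blast)
qed

section \<open>Shifting an assignment along a path\<close>

fun shift_path :: "('a \<Rightarrow> 'b) \<Rightarrow> 'b \<Rightarrow> 'a \<Rightarrow> 'a list \<Rightarrow> 'a \<Rightarrow> 'b" where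
  "shift_path f d x [] = f(x := d)"
| "shift_path f d x (y # ys) = (shift_path f d y ys)(x := f y)"

lemma shift_path_outside: "m \<notin> set (x # xs) \<Longrightarrow> shift_path f d x xs m = f m"
  by (induction xs arbitrary: x) auto

lemma shift_path_on_path:
  assumes "rtrancl_path r x xs a" "distinct (x # xs)" "m \<in> set (x # xs)"
  shows "(m = a \<and> shift_path f d x xs m = d) \<or> (\<exists>y\<in>set xs. r m y \<and> shift_path f d x xs m = f y)"
  using assms
proof (induction rule: rtrancl_path.induct)
  case (step x y ys a)
  then show ?case by (cases "m = x") auto
qed simp

lemma shift_path_image:
  "distinct (x # xs) \<Longrightarrow> shift_path f d x xs ` set (x # xs) = insert d (f ` set xs)"
proof (induction xs arbitrary: x)
  case (Cons y ys)
  then have "x \<notin> set (y # ys)" "distinct (y # ys)" by auto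
  then show ?case using Cons.IH by (auto simp: fun_upd_image)
qed simp

lemma inj_on_shift_path:
  assumes "distinct (x # xs)" "inj_on f (set xs)" "d \<notin> f ` set xs"
  shows "inj_on (shift_path f d x xs) (set (x # xs))"
proof -
  have "card (shift_path f d x xs ` set (x # xs)) = Suc (card (f ` set xs))"
    unfolding shift_path_image[OF assms(1)] using assms(3) by simp
  also have "\<dots> = card (set (x # xs))"
    using assms(1,2) by (simp add: card_image distinct_card)
  finally show ?thesis by (metis List.finite_set inj_on_iff_eq_card)
qed

lemma shift_path_on_path_eq_outside:
  fixes f :: "'a \<Rightarrow> 'b::zero"
  assumes dist: "distinct (x # xs)" and sub: "set (x # xs) \<subseteq> C"
    and inj: "inj_on f {m \<in> C. f m \<noteq> 0}" and nz: "\<forall>y\<in>set xs. f y \<noteq> 0"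
    and d: "d = 0 \<or> d \<notin> f ` C"
    and m: "m \<in> set (x # xs)" and m': "m' \<in> C" "m' \<notin> set (x # xs)"
    and eq: "shift_path f d x xs m = f m'"
  shows "f m' = 0"
proof (rule ccontr)
  assume nz': "f m' \<noteq> 0"
  have "shift_path f d x xs m \<in> shift_path f d x xs ` set (x # xs)" using m by (rule imageI)
  then have "f m' \<in> insert d (f ` set xs)" unfolding shift_path_image[OF dist] eq .
  then show False
  proof
    assume "f m' = d"
    then show False using d m'(1) nz' by auto
  next
    assume "f m' \<in> f ` set xs"
    then obtain y where y: "y \<in> set xs" "f y = f m'" by auto
    moreover have "f y \<noteq> 0" "y \<in> C" using nz sub y(1) by auto
    ultimately have "y = m'" using inj_onD[OF inj, of y m'] m'(1) by simp
    then show False using y(1) m'(2) by simp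
  qed
qed

lemma inj_on_nonzero_shift_path:
  fixes f :: "'a \<Rightarrow> 'b::zero"
  assumes dist: "distinct (x # xs)" and sub: "set (x # xs) \<subseteq> C"
    and inj: "inj_on f {m \<in> C. f m \<noteq> 0}" and nz: "\<forall>y\<in>set xs. f y \<noteq> 0"
    and d: "d = 0 \<or> d \<notin> f ` C"
  shows "inj_on (shift_path f d x xs) {m \<in> C. shift_path f d x xs m \<noteq> 0}"
proof (rule inj_onI)
  let ?g = "shift_path f d x xs"
  note collision = shift_path_on_path_eq_outside[OF dist sub inj nz d]
  fix m m' assume m: "m \<in> {m \<in> C. ?g m \<noteq> 0}" and m': "m' \<in> {m \<in> C. ?g m \<noteq> 0}"
    and eq: "?g m = ?g m'"
  consider "m \<in> set (x # xs)" "m' \<in> set (x # xs)" | "m \<in> set (x # xs)" "m' \<notin> set (x # xs)"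
    | "m \<notin> set (x # xs)" "m' \<in> set (x # xs)" | "m \<notin> set (x # xs)" "m' \<notin> set (x # xs)"
    by blast
  then show "m = m'"
  proof cases
    case 1
    have "inj_on f (set xs)" using inj sub nz by (auto intro: inj_on_subset)
    moreover have "d \<notin> f ` set xs" using d nz sub by auto
    ultimately have "inj_on ?g (set (x # xs))" by (rule inj_on_shift_path[OF dist])
    from this eq 1 show ?thesis by (rule inj_onD)
  next
    case 2
    have "?g m' = f m'" using 2(2) by (simp add: shift_path_outside)
    then have "f m' = 0" using collision[OF 2(1) _ 2(2)] m' eq by simp
    with \<open>?g m' = f m'\<close> m' show ?thesis by simp
  next
    case 3
    have "?g m = f m" using 3(1) by (simp add: shift_path_outside)
    then have "f m = 0" using collision[OF 3(2) _ 3(1)] m eq by simp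
    with \<open>?g m = f m\<close> m show ?thesis by simp
  next
    case 4
    then have "?g m = f m" "?g m' = f m'" by (simp_all add: shift_path_outside)
    then have "f m = f m'" "m \<in> {m \<in> C. f m \<noteq> 0}" "m' \<in> {m \<in> C. f m \<noteq> 0}"
      using m m' eq by auto
    then show ?thesis by (rule inj_onD[OF inj])
  qed
qed

lemma nonzero_image_shift_path:
  fixes f :: "'a \<Rightarrow> 'b::zero"
  assumes dist: "distinct (x # xs)" and sub: "set (x # xs) \<subseteq> C"
  shows "f ` {m \<in> C. f m \<noteq> 0} - {f x} \<subseteq> shift_path f d x xs ` {m \<in> C. shift_path f d x xs m \<noteq> 0}"
proof
  fix j assume "j \<in> f ` {m \<in> C. f m \<noteq> 0} - {f x}"
  then obtain m where m: "m \<in> C" "f m = j" "j \<noteq> 0" "j \<noteq> f x" by auto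
  show "j \<in> shift_path f d x xs ` {m \<in> C. shift_path f d x xs m \<noteq> 0}"
  proof (cases "m \<in> set (x # xs)")
    case True
    then have "m \<in> set xs" using m by auto
    then have "j \<in> shift_path f d x xs ` set (x # xs)"
      unfolding shift_path_image[OF dist] using m(2) by blast
    then obtain m' where "m' \<in> set (x # xs)" "shift_path f d x xs m' = j" by blast
    then show ?thesis using sub m(3) by blast
  next
    case False
    then show ?thesis using m shift_path_outside[OF False] by (metis (mono_tags, lifting) image_eqI mem_Collect_eq)
  qed
qed

lemma rtrancl_path_targets: "rtrancl_path r x xs a \<Longrightarrow> y \<in> set xs \<Longrightarrow> \<exists>u. r u y"
  by (induction rule: rtrancl_path.induct) auto

section \<open>The invariant of the DMA\<close>

lemma demand_maximal:
  assumes "\<exists>m\<in>{1..M}. 0 \<le> v m n - b m"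
  shows "demand M v b n \<in> {1..M}"
    and "\<And>m. m \<in> {1..M} \<Longrightarrow> v m n - b m \<le> v (demand M v b n) n - b (demand M v b n)"
    and "0 \<le> v (demand M v b n) n - b (demand M v b n)"
proof -
  define d where "d = (SOME m. m \<in> {1..M} \<and> (\<forall>m'\<in>{1..M}. v m' n - b m' \<le> v m n - b m))"
  have "\<exists>m0. is_arg_min (\<lambda>m. b m - v m n) (\<lambda>m. m \<in> {1..M}) m0"
    by (rule ex_is_arg_min_if_finite) (use assms in auto)
  then obtain m0 where "m0 \<in> {1..M}" "\<forall>m\<in>{1..M}. b m0 - v m0 n \<le> b m - v m n"
    unfolding is_arg_min_linorder by blast
  then have "\<exists>m. m \<in> {1..M} \<and> (\<forall>m'\<in>{1..M}. v m' n - b m' \<le> v m n - b m)"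
    by (auto intro!: exI[of _ m0])
  then have "d \<in> {1..M} \<and> (\<forall>m'\<in>{1..M}. v m' n - b m' \<le> v d n - b d)"
    unfolding d_def by (rule someI_ex)
  moreover have "demand M v b n = d"
    unfolding demand_def d_def using assms by (rule if_P)
  ultimately show "demand M v b n \<in> {1..M}"
    and max: "\<And>m. m \<in> {1..M} \<Longrightarrow> v m n - b m \<le> v (demand M v b n) n - b (demand M v b n)"
    by simp_all
  from assms obtain m1 where "m1 \<in> {1..M}" "0 \<le> v m1 n - b m1" by blast
  with max[of m1] show "0 \<le> v (demand M v b n) n - b (demand M v b n)" by linarith
qed

lemma demand_eq_0_iff: "demand M v b n = 0 \<longleftrightarrow> (\<forall>m\<in>{1..M}. v m n - b m < 0)"
proof
  assume d0: "demand M v b n = 0"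
  show "\<forall>m\<in>{1..M}. v m n - b m < 0"
  proof (rule ccontr)
    assume "\<not> (\<forall>m\<in>{1..M}. v m n - b m < 0)"
    then have "demand M v b n \<in> {1..M}" by (intro demand_maximal(1)) (auto simp: not_less)
    with d0 show False by simp
  qed
next
  assume "\<forall>m\<in>{1..M}. v m n - b m < 0"
  then have "\<not> (\<exists>m\<in>{1..M}. v m n - b m \<ge> 0)" by (simp add: not_le)
  then show "demand M v b n = 0" unfolding demand_def by (rule if_not_P)
qed

definition eps_demands ::
  "nat \<Rightarrow> (nat \<Rightarrow> nat \<Rightarrow> real) \<Rightarrow> real \<Rightarrow> (nat \<Rightarrow> real) \<Rightarrow> nat \<Rightarrow> nat \<Rightarrow> bool" where
  "eps_demands M v eps b m j \<longleftrightarrow>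
     0 \<le> v m j - b m + eps \<and> (\<forall>m'\<in>{1..M}. v m' j - b m' \<le> v m j - b m + eps)"

lemma eps_demands_raise_other_bids:
  assumes d: "eps_demands M v eps b m j" and eq: "b' m = b m" and le: "\<forall>m'\<in>{1..M}. b m' \<le> b' m'"
  shows "eps_demands M v eps b' m j"
  unfolding eps_demands_def
proof (intro conjI ballI)
  show "0 \<le> v m j - b' m + eps" using d eq unfolding eps_demands_def by simp
  fix m' assume m': "m' \<in> {1..M}"
  then have "v m' j - b m' \<le> v m j - b m + eps" using d unfolding eps_demands_def by blast
  with m' le eq show "v m' j - b' m' \<le> v m j - b' m + eps" by force
qed

locale dma_invariant_base =
  fixes M N :: nat and v :: "nat \<Rightarrow> nat \<Rightarrow> real" and eps :: real and s :: dma_state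
  assumes partner_range: "m \<in> {1..M} \<Longrightarrow> dma_mu s m = 0 \<or> dma_mu s m \<in> {1..N}"
    and partner_inj:
      "\<lbrakk>m \<in> {1..M}; m' \<in> {1..M}; dma_mu s m = dma_mu s m'; dma_mu s m \<noteq> 0\<rbrakk> \<Longrightarrow> m = m'"
    and bid_bounds: "m \<in> {1..M} \<Longrightarrow>
      0 \<le> dma_bprev s m \<and> dma_bprev s m \<le> dma_beta s m \<and> dma_beta s m \<le> dma_bprev s m + eps"
    and price_bounds: "\<lbrakk>m \<in> {1..M}; dma_mu s m \<noteq> 0\<rbrakk> \<Longrightarrow>
      0 \<le> dma_price s m \<and> dma_price s m \<le> dma_beta s m \<and> dma_beta s m \<le> dma_price s m + eps"
    and partner_demands: "\<lbrakk>m \<in> {1..M}; dma_mu s m \<noteq> 0\<rbrakk> \<Longrightarrow>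
      0 \<le> v m (dma_mu s m) - dma_price s m \<and>
      (\<forall>m'\<in>{1..M}. v m' (dma_mu s m) - dma_beta s m' \<le> v m (dma_mu s m) - dma_price s m)"
    and proposer_range: "dma_gprev s m k \<Longrightarrow> m \<in> {1..M} \<and> k \<in> {1..N}"
    and proposer_demands: "dma_gprev s m k \<Longrightarrow>
      0 \<le> v m k - dma_bprev s m \<and> (\<forall>m'\<in>{1..M}. v m' k - dma_beta s m' \<le> v m k - dma_bprev s m)"
    and proposer_free: "dma_gprev s m k \<Longrightarrow> d2d_unmatched M s k \<or> dma_mu s m = k"
    and proposer_unique: "\<lbrakk>dma_gprev s m k; dma_gprev s m' k\<rbrakk> \<Longrightarrow> m = m'"
    and unmatched_positive_bid_proposed:
      "\<lbrakk>m \<in> {1..M}; dma_mu s m = 0; 0 < dma_beta s m\<rbrakk> \<Longrightarrow> \<exists>k. dma_gprev s m k"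
    and proposer_prefers_unmatched:
      "\<lbrakk>dma_gprev s m' k; dma_mu s m' = 0; dma_gprev s m x; dma_mu s m = 0\<rbrakk> \<Longrightarrow>
       v m k - dma_beta s m \<le> v m' k - dma_beta s m'"
begin

lemma partner_eps_demands:
  "\<lbrakk>m \<in> {1..M}; dma_mu s m \<noteq> 0\<rbrakk> \<Longrightarrow> eps_demands M v eps (dma_beta s) m (dma_mu s m)"
  using price_bounds partner_demands unfolding eps_demands_def by fastforce

lemma proposer_eps_demands:
  assumes g: "dma_gprev s m k"
  shows "eps_demands M v eps (dma_beta s) m k"
  unfolding eps_demands_def
proof (intro conjI ballI)
  have b: "dma_beta s m \<le> dma_bprev s m + eps" using bid_bounds proposer_range[OF g] by blast
  note d = proposer_demands[OF g]
  then show "0 \<le> v m k - dma_beta s m + eps" using b by linarith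
  fix m' assume "m' \<in> {1..M}"
  then have "v m' k - dma_beta s m' \<le> v m k - dma_bprev s m" using d by blast
  with b show "v m' k - dma_beta s m' \<le> v m k - dma_beta s m + eps" by linarith
qed

lemma finite_proposers: "finite {k. dma_gprev s m k}"
  by (rule finite_subset[of _ "{1..N}"]) (use proposer_range in auto)

end

text \<open>The surplus condition is a Hall-type condition with one spare D2D pair per set of CUs; at
  termination it yields, for every D2D pair, an \<open>\<epsilon>\<close>-optimal matching avoiding it.\<close>

locale dma_invariant = dma_invariant_base +
  assumes surplus: "\<lbrakk>S \<subseteq> {1..M}; S \<noteq> {}; \<forall>m\<in>S. 0 < dma_beta s m\<rbrakk> \<Longrightarrow>
    card S + 1 \<le> card {j \<in> {1..N}. \<exists>m\<in>S. eps_demands M v eps (dma_beta s) m j}"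

lemma dma_invariant_init: "0 \<le> eps \<Longrightarrow> dma_invariant M N v eps dma_init"
  by unfold_locales (auto simp: dma_init_def)

section \<open>One iteration\<close>

text \<open>Step (ii) matches each CU in \<open>fallback_cus\<close> to the previous proposer \<open>sel m\<close>; the
  proposals that survive it are the live ones, and step (iii) lets every other CU with a live
  proposal either accept or reject.\<close>

definition fallback_cus :: "nat \<Rightarrow> nat \<Rightarrow> (nat \<Rightarrow> nat \<Rightarrow> real) \<Rightarrow> dma_state \<Rightarrow> nat set" where
  "fallback_cus M N v s = {m \<in> {1..M}. card {n \<in> {1..N}. proposals M N v s m n} = 0 \<and>
      (\<exists>n\<in>{1..N}. dma_gprev s m n) \<and> dma_mu s m = 0}"

definition live_proposal ::
  "nat \<Rightarrow> nat \<Rightarrow> (nat \<Rightarrow> nat \<Rightarrow> real) \<Rightarrow> dma_state \<Rightarrow> (nat \<Rightarrow> nat) \<Rightarrow> nat \<Rightarrow> nat \<Rightarrow> bool" where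
  "live_proposal M N v s sel m n \<longleftrightarrow> proposals M N v s m n \<and> n \<notin> sel ` fallback_cus M N v s"

definition cu_accepts ::
  "nat \<Rightarrow> nat \<Rightarrow> (nat \<Rightarrow> nat \<Rightarrow> real) \<Rightarrow> dma_state \<Rightarrow> (nat \<Rightarrow> nat) \<Rightarrow> nat \<Rightarrow> bool" where
  "cu_accepts M N v s sel m \<longleftrightarrow> m \<in> {1..M} \<and> m \<notin> fallback_cus M N v s \<and>
      card {n \<in> {1..N}. live_proposal M N v s sel m n} = 1 \<and>
      (dma_mu s m = 0 \<or> dma_price s m < dma_beta s m)"

definition cu_rejects ::
  "nat \<Rightarrow> nat \<Rightarrow> (nat \<Rightarrow> nat \<Rightarrow> real) \<Rightarrow> dma_state \<Rightarrow> (nat \<Rightarrow> nat) \<Rightarrow> nat \<Rightarrow> bool" where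
  "cu_rejects M N v s sel m \<longleftrightarrow> m \<in> {1..M} \<and> m \<notin> fallback_cus M N v s \<and>
      \<not> cu_accepts M N v s sel m \<and> card {n \<in> {1..N}. live_proposal M N v s sel m n} \<ge> 1"

definition dma_next ::
  "nat \<Rightarrow> nat \<Rightarrow> (nat \<Rightarrow> nat \<Rightarrow> real) \<Rightarrow> real \<Rightarrow> dma_state \<Rightarrow> (nat \<Rightarrow> nat) \<Rightarrow> dma_state" where
  "dma_next M N v eps s sel =
    \<lparr> dma_mu = (\<lambda>m. if m \<in> fallback_cus M N v s then sel m
        else if cu_accepts M N v s sel m then (THE n. n \<in> {1..N} \<and> live_proposal M N v s sel m n)
        else if cu_rejects M N v s sel m then 0 else dma_mu s m),
      dma_price = (\<lambda>m. if m \<in> fallback_cus M N v s then dma_bprev s m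
        else if cu_accepts M N v s sel m then dma_beta s m else dma_price s m),
      dma_beta = (\<lambda>m. if cu_rejects M N v s sel m then dma_beta s m + eps else dma_beta s m),
      dma_bprev = dma_beta s,
      dma_gprev = (\<lambda>m n. live_proposal M N v s sel m n \<or>
        (cu_rejects M N v s sel m \<and> dma_mu s m \<noteq> 0 \<and> n = dma_mu s m \<and>
         dma_price s m = dma_beta s m)) \<rparr>"

lemma dma_iter_iff:
  "dma_iter M N v eps s s' \<longleftrightarrow>
    (\<exists>sel. (\<forall>m\<in>fallback_cus M N v s. sel m \<in> {1..N} \<and> dma_gprev s m (sel m)) \<and>
       s' = dma_next M N v eps s sel)"
  unfolding dma_iter_def Let_def fallback_cus_def dma_next_def live_proposal_def
    cu_accepts_def cu_rejects_def
  by (rule refl)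

locale dma_iteration = dma_invariant +
  fixes sel :: "nat \<Rightarrow> nat"
  assumes eps_nonneg: "0 \<le> eps"
    and no_ties: "no_ties M N v (dma_beta s)"
    and sel_proposer: "m \<in> fallback_cus M N v s \<Longrightarrow> sel m \<in> {1..N} \<and> dma_gprev s m (sel m)"
begin

abbreviation "A \<equiv> fallback_cus M N v s"
abbreviation "s' \<equiv> dma_next M N v eps s sel"
abbreviation "\<mu> \<equiv> dma_mu s"
abbreviation "\<beta> \<equiv> dma_beta s"
abbreviation "p \<equiv> dma_price s"
abbreviation "\<mu>' \<equiv> dma_mu s'"
abbreviation "\<beta>' \<equiv> dma_beta s'"
abbreviation "p' \<equiv> dma_price s'"
abbreviation "live \<equiv> live_proposal M N v s sel"
abbreviation "accepts \<equiv> cu_accepts M N v s sel"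
abbreviation "rejects \<equiv> cu_rejects M N v s sel"
abbreviation "kept m \<equiv> m \<notin> A \<and> \<not> accepts m \<and> \<not> rejects m"

lemma proposalD:
  assumes "proposals M N v s m k"
  shows "m \<in> {1..M}" "k \<in> {1..N}" "d2d_unmatched M s k" "0 \<le> v m k - \<beta> m"
    "\<And>m'. m' \<in> {1..M} \<Longrightarrow> v m' k - \<beta> m' \<le> v m k - \<beta> m"
proof -
  have d: "demand M v \<beta> k = m" "m \<noteq> 0" and k: "k \<in> {1..N}" "d2d_unmatched M s k"
    using assms unfolding proposals_def by auto
  then have "\<exists>m\<in>{1..M}. 0 \<le> v m k - \<beta> m"
    using demand_eq_0_iff[of M v \<beta> k] by (auto simp: not_less)
  from demand_maximal[of M v k \<beta>, OF this] d k
  show "m \<in> {1..M}" "k \<in> {1..N}" "d2d_unmatched M s k" "0 \<le> v m k - \<beta> m"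
    "\<And>m'. m' \<in> {1..M} \<Longrightarrow> v m' k - \<beta> m' \<le> v m k - \<beta> m"
    by simp_all
qed

lemma proposal_unique: "\<lbrakk>proposals M N v s m k; proposals M N v s m' k\<rbrakk> \<Longrightarrow> m = m'"
  unfolding proposals_def by simp

lemma proposal_not_fallback:
  assumes "proposals M N v s m k"
  shows "m \<notin> A"
proof
  assume "m \<in> A"
  then have "card {n \<in> {1..N}. proposals M N v s m n} = 0"
    unfolding fallback_cus_def by simp
  moreover have "k \<in> {n \<in> {1..N}. proposals M N v s m n}"
    using assms proposalD(2)[OF assms] by simp
  ultimately show False by auto
qed

lemma fallbackD: "m \<in> A \<Longrightarrow> m \<in> {1..M} \<and> \<mu> m = 0"
  unfolding fallback_cus_def by simp

lemma fallback_proposer_unmatched: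
  assumes "m \<in> A"
  shows "sel m \<in> {1..N}" "dma_gprev s m (sel m)" "d2d_unmatched M s (sel m)"
proof -
  show k: "sel m \<in> {1..N}" and g: "dma_gprev s m (sel m)" using sel_proposer[OF assms] by auto
  have "\<mu> m = 0" using fallbackD[OF assms] by simp
  with k proposer_free[OF g] show "d2d_unmatched M s (sel m)" by auto
qed

lemma proposal_if_not_fallback:
  assumes "m \<in> {1..M}" "\<mu> m = 0" "dma_gprev s m x" "m \<notin> A"
  shows "\<exists>k. proposals M N v s m k"
proof (rule ccontr)
  assume "\<nexists>k. proposals M N v s m k"
  then have "card {n \<in> {1..N}. proposals M N v s m n} = 0" by simp
  moreover have "x \<in> {1..N}" using proposer_range[OF assms(3)] by simp
  ultimately have "m \<in> A" using assms(1-3) unfolding fallback_cus_def by blast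
  with assms(4) show False by simp
qed

lemma live_proposalD: "live m k \<Longrightarrow> proposals M N v s m k \<and> k \<notin> sel ` A"
  unfolding live_proposal_def by simp

lemma live_accepts_or_rejects:
  assumes "live m k"
  shows "accepts m \<or> rejects m"
proof -
  have p: "proposals M N v s m k" using live_proposalD[OF assms] by simp
  have "k \<in> {n \<in> {1..N}. live m n}" using assms proposalD(2)[OF p] by simp
  then have "card {n \<in> {1..N}. live m n} \<ge> 1"
    using card_gt_0_iff[of "{n \<in> {1..N}. live m n}"] by auto
  then show ?thesis
    using proposalD(1)[OF p] proposal_not_fallback[OF p] unfolding cu_rejects_def by blast
qed

lemma accepts_live_proposals:
  assumes "accepts m"
  shows "{n \<in> {1..N}. live m n} = {\<mu>' m}"
proof -
  obtain k where k: "{n \<in> {1..N}. live m n} = {k}"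
    using assms unfolding cu_accepts_def by (auto simp: card_1_singleton_iff)
  then have "(THE n. n \<in> {1..N} \<and> live m n) = k" by (intro the_equality) auto
  with assms k show ?thesis
    unfolding cu_accepts_def dma_next_def by simp
qed

lemma accepts_partner:
  assumes "accepts m"
  shows "\<mu>' m \<in> {1..N}" "live m (\<mu>' m)"
  using accepts_live_proposals[OF assms] by auto

lemma next_fallback: "m \<in> A \<Longrightarrow> \<mu>' m = sel m \<and> p' m = dma_bprev s m \<and> \<beta>' m = \<beta> m"
  unfolding dma_next_def cu_rejects_def by simp

lemma next_accepts:
  assumes "accepts m"
  shows "p' m = \<beta> m \<and> \<beta>' m = \<beta> m"
proof -
  have "m \<notin> A" "\<not> rejects m" using assms unfolding cu_accepts_def cu_rejects_def by auto
  with assms show ?thesis unfolding dma_next_def by simp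
qed

lemma next_rejects: "rejects m \<Longrightarrow> m \<in> {1..M} \<and> \<mu>' m = 0 \<and> \<beta>' m = \<beta> m + eps"
  unfolding dma_next_def cu_rejects_def by simp

lemma next_kept: "kept m \<Longrightarrow> \<mu>' m = \<mu> m \<and> p' m = p m \<and> \<beta>' m = \<beta> m"
  unfolding dma_next_def by simp

lemma next_bprev: "dma_bprev s' = \<beta>"
  unfolding dma_next_def by simp

lemma next_gprev_iff:
  "dma_gprev s' m k \<longleftrightarrow> live m k \<or> (rejects m \<and> \<mu> m \<noteq> 0 \<and> k = \<mu> m \<and> p m = \<beta> m)"
  unfolding dma_next_def by simp

lemma next_bid_not_rejected: "\<not> rejects m \<Longrightarrow> \<beta>' m = \<beta> m"
  unfolding dma_next_def by simp

lemma bid_le_next: "\<beta> m \<le> \<beta>' m"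
  using eps_nonneg unfolding dma_next_def by simp

lemma surplus_bound_next:
  "(\<forall>m'\<in>{1..M}. v m' k - \<beta> m' \<le> c) \<Longrightarrow> (\<forall>m'\<in>{1..M}. v m' k - \<beta>' m' \<le> c)"
  using bid_le_next by (smt (verit))

lemma next_partner_cases:
  assumes "\<mu>' m \<noteq> 0"
  shows "(m \<in> A \<and> \<mu>' m = sel m) \<or> (accepts m \<and> live m (\<mu>' m)) \<or> (kept m \<and> \<mu>' m = \<mu> m)"
  using assms next_fallback accepts_partner next_rejects next_kept by metis

lemma new_partner_source:
  assumes "\<mu>' m \<noteq> 0" "\<not> kept m"
  shows "(m \<in> A \<and> dma_gprev s m (\<mu>' m) \<and> \<mu>' m \<in> sel ` A) \<or>
         (accepts m \<and> proposals M N v s m (\<mu>' m) \<and> \<mu>' m \<notin> sel ` A)"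
proof -
  consider (fallback) "m \<in> A" "\<mu>' m = sel m" | (acc) "accepts m" "live m (\<mu>' m)"
    using next_partner_cases[OF assms(1)] assms(2) by blast
  then show ?thesis
  proof cases
    case fallback
    then show ?thesis using fallback_proposer_unmatched(2)[OF fallback(1)] by auto
  next
    case acc
    then show ?thesis using live_proposalD by blast
  qed
qed

lemma new_partner_was_unmatched:
  assumes "\<mu>' m \<noteq> 0" "\<not> kept m"
  shows "d2d_unmatched M s (\<mu>' m)"
  using new_partner_source[OF assms] fallback_proposer_unmatched(3) proposalD(3) by auto

lemma next_partner_range: "m \<in> {1..M} \<Longrightarrow> \<mu>' m = 0 \<or> \<mu>' m \<in> {1..N}"
  using next_partner_cases[of m] fallback_proposer_unmatched(1) accepts_partner(1)
    partner_range[of m] by auto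

lemma next_partner_inj:
  assumes m: "m \<in> {1..M}" "m2 \<in> {1..M}" and eq: "\<mu>' m = \<mu>' m2" and nz: "\<mu>' m \<noteq> 0"
  shows "m = m2"
proof (cases "kept m"; cases "kept m2")
  assume "kept m" "kept m2"
  then show ?thesis using partner_inj[OF m] eq nz next_kept by simp
next
  assume "kept m" "\<not> kept m2"
  then show ?thesis
    using new_partner_was_unmatched[of m2] m(1) eq nz next_kept unfolding d2d_unmatched_def by auto
next
  assume "\<not> kept m" "kept m2"
  then show ?thesis
    using new_partner_was_unmatched[of m] m(2) eq nz next_kept unfolding d2d_unmatched_def by auto
next
  assume "\<not> kept m" "\<not> kept m2"
  then show ?thesis
    using new_partner_source[of m] new_partner_source[of m2] eq nz proposer_unique proposal_unique
    by metis
qed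

lemma rejected_gprev_unmatched:
  assumes rej: "rejects m" and g: "dma_gprev s' m k"
  shows "d2d_unmatched M s' k"
  unfolding d2d_unmatched_def
proof (intro ballI notI)
  fix m2 assume m2: "m2 \<in> {1..M}" and e: "\<mu>' m2 = k"
  have m: "m \<in> {1..M}" "\<not> accepts m" "m \<notin> A" using rej unfolding cu_rejects_def by auto
  consider (live) "live m k" | (old) "\<mu> m \<noteq> 0" "k = \<mu> m"
    using g next_gprev_iff by blast
  then show False
  proof cases
    case live
    have p: "proposals M N v s m k" "k \<notin> sel ` A" using live_proposalD[OF live] by auto
    have "k \<noteq> 0" using proposalD(2)[OF p(1)] by simp
    with e consider (fallback) "m2 \<in> A" "k = sel m2" | (acc) "accepts m2" "live m2 k" | (kept) "\<mu> m2 = k"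
      using next_partner_cases[of m2] by auto
    then show False
    proof cases
      case fallback
      then show False using p(2) by blast
    next
      case acc
      then have "m2 = m" using live_proposalD proposal_unique p(1) by blast
      with acc m(2) show False by simp
    next
      case kept
      then show False using proposalD(3)[OF p(1)] m2 unfolding d2d_unmatched_def by blast
    qed
  next
    case old
    show False
    proof (cases "kept m2")
      case True
      then have "m2 = m" using partner_inj[OF m2 m(1)] e old next_kept by simp
      with True rej show False by simp
    next
      case False
      then show False
        using new_partner_was_unmatched[of m2] e old m(1) unfolding d2d_unmatched_def by auto
    qed
  qed
qed

lemma positive_bid_not_rejected_matched:
  assumes m: "m \<in> {1..M}" and pos: "0 < \<beta> m" and nrej: "\<not> rejects m"
  shows "\<mu>' m \<noteq> 0"
proof (cases "m \<in> A \<or> accepts m \<or> \<mu> m \<noteq> 0")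
  case True
  then show ?thesis
    using next_fallback fallback_proposer_unmatched(1) accepts_partner(1) next_kept nrej by force
next
  case False
  then have nA: "m \<notin> A" and z: "\<mu> m = 0" and nacc: "\<not> accepts m" by auto
  obtain x where x: "dma_gprev s m x" using unmatched_positive_bid_proposed[OF m z pos] by blast
  obtain k where pk: "proposals M N v s m k" using proposal_if_not_fallback[OF m z x nA] by blast
  have "\<not> live m k" using live_accepts_or_rejects nacc nrej by blast
  then obtain m2 where m2: "m2 \<in> A" "k = sel m2" using pk unfolding live_proposal_def by blast
  have g2: "dma_gprev s m2 k" "\<mu> m2 = 0" "m2 \<in> {1..M}"
    using fallback_proposer_unmatched(2)[OF m2(1)] fallbackD[OF m2(1)] m2(2) by auto
  txt \<open>The proposal of \<open>k\<close> was withdrawn for the fallback CU \<open>m2\<close>, which \<open>k\<close> likes at least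
    as much as \<open>m\<close>; without ties this forces \<open>m = m2\<close>.\<close>
  have "v m k - \<beta> m \<le> v m2 k - \<beta> m2"
    using proposer_prefers_unmatched[OF g2(1,2) x z] .
  then have "\<forall>m'\<in>{1..M}. v m' k - \<beta> m' \<le> v m2 k - \<beta> m2"
    using proposalD(5)[OF pk] by fastforce
  then have "m = m2"
    using no_ties proposalD(1,2,5)[OF pk] g2(3) unfolding no_ties_def by blast
  with m2(1) nA show ?thesis by simp
qed

lemma next_gprev_max:
  assumes g: "dma_gprev s' m2 k" and m: "m \<in> {1..M}"
  shows "v m k - \<beta> m \<le> v m2 k - \<beta> m2"
proof -
  consider (live) "live m2 k" | (old) "rejects m2" "\<mu> m2 \<noteq> 0" "k = \<mu> m2" "p m2 = \<beta> m2"
    using g next_gprev_iff by blast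
  then show ?thesis
  proof cases
    case live
    then show ?thesis using proposalD(5) live_proposalD m by blast
  next
    case old
    then have "m2 \<in> {1..M}" using next_rejects by blast
    then show ?thesis using partner_demands[OF _ old(2)] old m by auto
  qed
qed

lemma next_gprev_unmatched_rejects:
  assumes g: "dma_gprev s' m k" and z: "\<mu>' m = 0"
  shows "rejects m"
proof (rule ccontr)
  assume "\<not> rejects m"
  then have "accepts m" using g next_gprev_iff live_accepts_or_rejects by blast
  then show False using accepts_partner(1) z by fastforce
qed

lemma next_partner_props:
  assumes m: "m \<in> {1..M}" and nz: "\<mu>' m \<noteq> 0"
  shows "0 \<le> p' m \<and> p' m \<le> \<beta>' m \<and> \<beta>' m \<le> p' m + eps"
    and "0 \<le> v m (\<mu>' m) - p' m \<and> (\<forall>m'\<in>{1..M}. v m' (\<mu>' m) - \<beta>' m' \<le> v m (\<mu>' m) - p' m)"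
proof -
  consider (fallback) "m \<in> A" "\<mu>' m = sel m" | (acc) "accepts m" "live m (\<mu>' m)"
    | (kept) "kept m" "\<mu>' m = \<mu> m"
    using next_partner_cases[OF nz] by blast
  then have "(0 \<le> p' m \<and> p' m \<le> \<beta>' m \<and> \<beta>' m \<le> p' m + eps) \<and>
    (0 \<le> v m (\<mu>' m) - p' m \<and> (\<forall>m'\<in>{1..M}. v m' (\<mu>' m) - \<beta>' m' \<le> v m (\<mu>' m) - p' m))"
  proof cases
    case fallback
    note d = proposer_demands[OF fallback_proposer_unmatched(2)[OF fallback(1)]]
    show ?thesis
      using next_fallback[OF fallback(1)] bid_bounds[OF m] surplus_bound_next[OF d[THEN conjunct2]]
        d fallback(2) by simp
  next
    case acc
    have pk: "proposals M N v s m (\<mu>' m)" using live_proposalD[OF acc(2)] by simp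
    have "\<forall>m'\<in>{1..M}. v m' (\<mu>' m) - \<beta> m' \<le> v m (\<mu>' m) - \<beta> m" using proposalD(5)[OF pk] by blast
    then show ?thesis
      using next_accepts[OF acc(1)] bid_bounds[OF m] eps_nonneg surplus_bound_next
        proposalD(4)[OF pk] by simp
  next
    case kept
    have nz0: "\<mu> m \<noteq> 0" using kept(2) nz by simp
    note d = partner_demands[OF m nz0]
    show ?thesis
      using next_kept[OF kept(1)] price_bounds[OF m nz0] d surplus_bound_next[OF d[THEN conjunct2]]
      by simp
  qed
  then show "0 \<le> p' m \<and> p' m \<le> \<beta>' m \<and> \<beta>' m \<le> p' m + eps"
    and "0 \<le> v m (\<mu>' m) - p' m \<and> (\<forall>m'\<in>{1..M}. v m' (\<mu>' m) - \<beta>' m' \<le> v m (\<mu>' m) - p' m)"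
    by simp_all
qed

lemma next_gprevE:
  assumes "dma_gprev s' m k"
  obtains (live) "live m k" "proposals M N v s m k"
    | (old) "rejects m" "m \<in> {1..M}" "\<mu> m \<noteq> 0" "k = \<mu> m" "p m = \<beta> m"
  using assms next_gprev_iff live_proposalD next_rejects by blast

lemma next_gprev_range:
  assumes "dma_gprev s' m k"
  shows "m \<in> {1..M} \<and> k \<in> {1..N}"
  using assms
proof (cases rule: next_gprevE)
  case live
  then show ?thesis using proposalD(1,2) by blast
next
  case old
  then show ?thesis using partner_range[OF old(2)] by auto
qed

lemma next_gprev_demands:
  assumes g: "dma_gprev s' m k"
  shows "0 \<le> v m k - dma_bprev s' m \<and> (\<forall>m'\<in>{1..M}. v m' k - \<beta>' m' \<le> v m k - dma_bprev s' m)"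
proof -
  have "\<forall>m'\<in>{1..M}. v m' k - \<beta> m' \<le> v m k - \<beta> m" using next_gprev_max[OF g] by blast
  moreover have "0 \<le> v m k - \<beta> m"
    using g
  proof (cases rule: next_gprevE)
    case live
    then show ?thesis using proposalD(4) by blast
  next
    case old
    then show ?thesis using partner_demands[OF old(2,3)] by simp
  qed
  ultimately show ?thesis using surplus_bound_next unfolding next_bprev by blast
qed

lemma next_gprev_free:
  assumes g: "dma_gprev s' m k"
  shows "d2d_unmatched M s' k \<or> \<mu>' m = k"
proof (cases "rejects m")
  case True
  then show ?thesis using rejected_gprev_unmatched[OF _ g] by blast
next
  case False
  then have "live m k" "accepts m" using g next_gprev_iff live_accepts_or_rejects by blast+
  then have "k \<in> {n \<in> {1..N}. live m n}" using proposalD(2) live_proposalD by blast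
  then have "k = \<mu>' m" using accepts_live_proposals[OF \<open>accepts m\<close>] by (metis singletonD)
  then show ?thesis by simp
qed

lemma next_gprev_unique:
  assumes "dma_gprev s' m k" "dma_gprev s' m' k"
  shows "m = m'"
  using assms(1)
proof (cases rule: next_gprevE)
  case live
  from assms(2) show ?thesis
  proof (cases rule: next_gprevE)
    case live': live
    show ?thesis using proposal_unique live(2) live'(2) by blast
  next
    case old
    then show ?thesis using proposalD(3)[OF live(2)] unfolding d2d_unmatched_def by auto
  qed
next
  case old
  from assms(2) show ?thesis
  proof (cases rule: next_gprevE)
    case live
    then show ?thesis using proposalD(3)[OF live(2)] old unfolding d2d_unmatched_def by auto
  next
    case old': old
    show ?thesis using partner_inj[OF old(2) old'(2)] old old' by simp
  qed
qed

lemma next_unmatched_positive_bid_proposed: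
  assumes m: "m \<in> {1..M}" "\<mu>' m = 0" "0 < \<beta>' m"
  shows "\<exists>k. dma_gprev s' m k"
proof (cases "rejects m")
  case True
  then have "1 \<le> card {n \<in> {1..N}. live m n}" unfolding cu_rejects_def by blast
  then have "{n \<in> {1..N}. live m n} \<noteq> {}" by (metis card.empty not_one_le_zero)
  then show ?thesis using next_gprev_iff by blast
next
  case False
  then show ?thesis
    using positive_bid_not_rejected_matched[OF m(1) _ False] next_bid_not_rejected m by simp
qed

lemma next_proposer_prefers_unmatched:
  assumes "dma_gprev s' m' k" "\<mu>' m' = 0" "dma_gprev s' m x" "\<mu>' m = 0"
  shows "v m k - \<beta>' m \<le> v m' k - \<beta>' m'"
proof -
  have "rejects m" "rejects m'" using next_gprev_unmatched_rejects assms by blast+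
  moreover have "v m k - \<beta> m \<le> v m' k - \<beta> m'"
    using next_gprev_max[OF assms(1)] next_gprev_range[OF assms(3)] by blast
  ultimately show ?thesis using next_rejects by simp
qed

lemma next_bid_bounds:
  assumes "m \<in> {1..M}"
  shows "0 \<le> dma_bprev s' m \<and> dma_bprev s' m \<le> \<beta>' m \<and> \<beta>' m \<le> dma_bprev s' m + eps"
  using bid_bounds[OF assms] eps_nonneg unfolding dma_next_def by auto

lemma next_invariant_base: "dma_invariant_base M N v eps s'"
proof
  show "\<mu>' m = 0 \<or> \<mu>' m \<in> {1..N}" if "m \<in> {1..M}" for m
    using that by (rule next_partner_range)
  show "m = m'" if "m \<in> {1..M}" "m' \<in> {1..M}" "\<mu>' m = \<mu>' m'" "\<mu>' m \<noteq> 0" for m m'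
    using that by (rule next_partner_inj)
  show "0 \<le> dma_bprev s' m \<and> dma_bprev s' m \<le> \<beta>' m \<and> \<beta>' m \<le> dma_bprev s' m + eps"
    if "m \<in> {1..M}" for m
    using that by (rule next_bid_bounds)
  show "0 \<le> p' m \<and> p' m \<le> \<beta>' m \<and> \<beta>' m \<le> p' m + eps" if "m \<in> {1..M}" "\<mu>' m \<noteq> 0" for m
    using that by (rule next_partner_props(1))
  show "0 \<le> v m (\<mu>' m) - p' m \<and> (\<forall>m'\<in>{1..M}. v m' (\<mu>' m) - \<beta>' m' \<le> v m (\<mu>' m) - p' m)"
    if "m \<in> {1..M}" "\<mu>' m \<noteq> 0" for m
    using that by (rule next_partner_props(2))
  show "m \<in> {1..M} \<and> k \<in> {1..N}" if "dma_gprev s' m k" for m k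
    using that by (rule next_gprev_range)
  show "0 \<le> v m k - dma_bprev s' m \<and> (\<forall>m'\<in>{1..M}. v m' k - \<beta>' m' \<le> v m k - dma_bprev s' m)"
    if "dma_gprev s' m k" for m k
    using that by (rule next_gprev_demands)
  show "d2d_unmatched M s' k \<or> \<mu>' m = k" if "dma_gprev s' m k" for m k
    using that by (rule next_gprev_free)
  show "m = m'" if "dma_gprev s' m k" "dma_gprev s' m' k" for m m' k
    using that by (rule next_gprev_unique)
  show "\<exists>k. dma_gprev s' m k" if "m \<in> {1..M}" "\<mu>' m = 0" "0 < \<beta>' m" for m
    using that by (rule next_unmatched_positive_bid_proposed)
  show "v m k - \<beta>' m \<le> v m' k - \<beta>' m'"
    if "dma_gprev s' m' k" "\<mu>' m' = 0" "dma_gprev s' m x" "\<mu>' m = 0" for m m' k x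
    using that by (rule next_proposer_prefers_unmatched)
qed

lemma card_next_gprev_rejects:
  assumes rej: "rejects m"
  shows "2 \<le> card {k. dma_gprev s' m k}"
proof -
  interpret after: dma_invariant_base M N v eps s' by (rule next_invariant_base)
  let ?C = "{n \<in> {1..N}. live m n}"
  have C1: "1 \<le> card ?C" and m: "m \<in> {1..M}" "m \<notin> A" "\<not> accepts m"
    using rej unfolding cu_rejects_def by auto
  have sub: "?C \<subseteq> {k. dma_gprev s' m k}" using next_gprev_iff by blast
  show ?thesis
  proof (cases "card ?C = 1")
    case False
    then show ?thesis using C1 card_mono[OF after.finite_proposers sub] by linarith
  next
    case True
    txt \<open>With a single live proposal, \<open>m\<close> rejects only if its price already equals its bid, and
      then its old partner joins its proposers.\<close>
    then obtain k0 where k0: "?C = {k0}" by (rule card_1_singletonE)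
    have "\<not> (\<mu> m = 0 \<or> p m < \<beta> m)" using m True unfolding cu_accepts_def by blast
    then have mu: "\<mu> m \<noteq> 0" "p m = \<beta> m" using price_bounds[OF m(1)] by force+
    then have old: "\<mu> m \<in> {k. dma_gprev s' m k}" using next_gprev_iff rej by blast
    have "live m k0" using k0 by blast
    then have "k0 \<noteq> \<mu> m"
      using proposalD(3) live_proposalD m(1) unfolding d2d_unmatched_def by blast
    then have "card {k0, \<mu> m} = 2" by simp
    moreover have "{k0, \<mu> m} \<subseteq> {k. dma_gprev s' m k}" using old sub k0 by blast
    ultimately show ?thesis using card_mono[OF after.finite_proposers] by metis
  qed
qed

lemma next_surplus_without_rejection:
  assumes S: "S \<subseteq> {1..M}" "S \<noteq> {}" and pos: "\<forall>m\<in>S. 0 < \<beta>' m"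
    and nrej: "\<forall>m\<in>S. \<not> rejects m"
  shows "card S + 1 \<le> card {j \<in> {1..N}. \<exists>m\<in>S. eps_demands M v eps \<beta>' m j}"
proof -
  have same: "\<beta>' m = \<beta> m" if "m \<in> S" for m
    using that nrej next_bid_not_rejected by blast
  have "card S + 1 \<le> card {j \<in> {1..N}. \<exists>m\<in>S. eps_demands M v eps \<beta> m j}"
    using surplus[OF S] pos same by simp
  also have "\<dots> \<le> card {j \<in> {1..N}. \<exists>m\<in>S. eps_demands M v eps \<beta>' m j}"
  proof (rule card_mono, simp, safe)
    fix j m assume "j \<in> {1..N}" "m \<in> S" "eps_demands M v eps \<beta> m j"
    then show "\<exists>m\<in>S. eps_demands M v eps \<beta>' m j"
      using eps_demands_raise_other_bids same bid_le_next by blast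
  qed
  finally show ?thesis .
qed

text \<open>Every rejecting CU has at least two previous proposers, which are unmatched and
  \<open>\<epsilon>\<close>-demand it at its raised bid; every other CU of \<open>S\<close> is matched to its own D2D pair.\<close>

lemma next_surplus_with_rejection:
  assumes S: "S \<subseteq> {1..M}" and pos: "\<forall>m\<in>S. 0 < \<beta>' m" and rej: "\<exists>m\<in>S. rejects m"
  shows "card S + 1 \<le> card {j \<in> {1..N}. \<exists>m\<in>S. eps_demands M v eps \<beta>' m j}"
proof -
  interpret after: dma_invariant_base M N v eps s' by (rule next_invariant_base)
  define G where "G = {j \<in> {1..N}. \<exists>m\<in>S. eps_demands M v eps \<beta>' m j}"
  define K where "K = {m \<in> S. rejects m}"
  define R where "R = S - K"
  define P where "P = (\<Union>m\<in>K. {k. dma_gprev s' m k})"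
  have finS: "finite S" using S finite_subset by blast
  have finK: "finite K" and finR: "finite R" using finS unfolding K_def R_def by simp_all
  have RS: "R \<subseteq> {1..M}" and KS: "K \<subseteq> S" using S unfolding R_def K_def by auto
  have R_matched: "\<mu>' m \<noteq> 0" if "m \<in> R" for m
    using that RS pos next_bid_not_rejected positive_bid_not_rejected_matched
    unfolding R_def K_def by fastforce
  have "\<mu>' ` R \<subseteq> G"
  proof
    fix j assume "j \<in> \<mu>' ` R"
    then obtain m where m: "m \<in> R" "j = \<mu>' m" by blast
    have mM: "m \<in> {1..M}" "m \<in> S" using m(1) RS unfolding R_def by auto
    have "\<mu>' m \<in> {1..N}" using after.partner_range[OF mM(1)] R_matched[OF m(1)] by simp
    then show "j \<in> G"
      using after.partner_eps_demands[OF mM(1) R_matched[OF m(1)]] mM(2) m(2) unfolding G_def by blast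
  qed
  moreover have "P \<subseteq> G"
    using after.proposer_eps_demands after.proposer_range KS unfolding P_def G_def by blast
  moreover have "\<mu>' ` R \<inter> P = {}"
    using rejected_gprev_unmatched RS unfolding P_def K_def d2d_unmatched_def by blast
  moreover have "finite P" using finK after.finite_proposers unfolding P_def by blast
  moreover have "finite G" unfolding G_def by simp
  ultimately have "card (\<mu>' ` R) + card P \<le> card G"
    using card_Un_disjoint[of "\<mu>' ` R" P] finR card_mono by (metis Un_subset_iff finite_imageI)
  moreover have "card (\<mu>' ` R) = card R"
  proof (rule card_image, rule inj_onI)
    fix x y assume "x \<in> R" "y \<in> R" "\<mu>' x = \<mu>' y"
    then show "x = y" using next_partner_inj RS R_matched by blast
  qed
  moreover have "card P = (\<Sum>m\<in>K. card {k. dma_gprev s' m k})"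
    unfolding P_def
  proof (rule card_UN_disjoint[OF finK])
    show "\<forall>m\<in>K. finite {k. dma_gprev s' m k}" using after.finite_proposers by blast
    show "\<forall>m\<in>K. \<forall>m'\<in>K. m \<noteq> m' \<longrightarrow> {k. dma_gprev s' m k} \<inter> {k. dma_gprev s' m' k} = {}"
      using after.proposer_unique by blast
  qed
  moreover have "(\<Sum>m\<in>K. 2) \<le> (\<Sum>m\<in>K. card {k. dma_gprev s' m k})"
    by (rule sum_mono) (use card_next_gprev_rejects in \<open>simp add: K_def\<close>)
  moreover have "card S = card R + card K"
  proof -
    have "S = R \<union> K" "R \<inter> K = {}" using KS unfolding R_def by auto
    then show ?thesis using card_Un_disjoint[OF finR finK] by simp
  qed
  moreover have "card K \<ge> 1" using rej finK unfolding K_def by (auto simp: Suc_le_eq card_gt_0_iff)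
  ultimately show ?thesis unfolding G_def by simp
qed

lemma next_surplus:
  assumes "S \<subseteq> {1..M}" "S \<noteq> {}" "\<forall>m\<in>S. 0 < \<beta>' m"
  shows "card S + 1 \<le> card {j \<in> {1..N}. \<exists>m\<in>S. eps_demands M v eps \<beta>' m j}"
  using next_surplus_without_rejection[OF assms] next_surplus_with_rejection[OF assms(1,3)] by blast

lemma next_invariant: "dma_invariant M N v eps s'"
  using next_invariant_base next_surplus
  by (simp add: dma_invariant_def dma_invariant_axioms_def)

lemma no_proposal_not_rejects:
  assumes "\<not> has_proposal M N v s"
  shows "\<not> rejects m"
proof
  assume "rejects m"
  then have "1 \<le> card {n \<in> {1..N}. live m n}" unfolding cu_rejects_def by blast
  then obtain k where "live m k" by (metis (no_types, lifting) card.empty empty_Collect_eq not_one_le_zero)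
  with assms show False unfolding has_proposal_def live_proposal_def by blast
qed

lemma no_proposal_positive_bid_matched:
  assumes "\<not> has_proposal M N v s" "m \<in> {1..M}" "0 < \<beta>' m"
  shows "\<mu>' m \<noteq> 0"
  using positive_bid_not_rejected_matched no_proposal_not_rejects next_bid_not_rejected assms by simp

lemma no_proposal_unmatched_unwanted:
  assumes np: "\<not> has_proposal M N v s" and k: "k \<in> {1..N}" and u: "d2d_unmatched M s' k"
    and m: "m \<in> {1..M}"
  shows "v m k - \<beta>' m < 0"
proof -
  have "\<not> accepts m2" for m2
    using np accepts_partner(2) live_proposalD unfolding has_proposal_def by blast
  then have "d2d_unmatched M s k"
    using u k fallbackD next_kept no_proposal_not_rejects[OF np] unfolding d2d_unmatched_def
    by (metis atLeastAtMost_iff not_one_le_zero)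
  then have "demand M v \<beta> k = 0"
    using np k unfolding has_proposal_def proposals_def by blast
  then show ?thesis
    using demand_eq_0_iff m next_bid_not_rejected no_proposal_not_rejects[OF np] by simp
qed

end

lemma dma_reach_invariant:
  assumes "dma_reach M N v eps s" and eps: "0 \<le> eps"
    and no_ties: "\<And>s'. dma_reach M N v eps s' \<Longrightarrow> no_ties M N v (dma_beta s')"
  shows "dma_invariant M N v eps s"
  using assms(1)
proof (induction rule: dma_reach.induct)
  case init
  show ?case using eps by (rule dma_invariant_init)
next
  case (step s s')
  obtain sel where sel: "\<forall>m\<in>fallback_cus M N v s. sel m \<in> {1..N} \<and> dma_gprev s m (sel m)"
    and s': "s' = dma_next M N v eps s sel"
    using step.hyps(3) dma_iter_iff by blast
  have "dma_iteration M N v eps s sel"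
    using step.IH eps no_ties[OF step.hyps(1)] sel
    by (intro dma_iteration.intro dma_iteration_axioms.intro) auto
  then show ?case unfolding s' by (rule dma_iteration.next_invariant)
qed

section \<open>The terminal state\<close>

definition best_surplus :: "nat \<Rightarrow> (nat \<Rightarrow> nat \<Rightarrow> real) \<Rightarrow> (nat \<Rightarrow> real) \<Rightarrow> nat \<Rightarrow> real" where
  "best_surplus M v b j = Max (insert 0 ((\<lambda>m. v m j - b m) ` {1..M}))"

lemma best_surplus_nonneg: "0 \<le> best_surplus M v b j"
  unfolding best_surplus_def by (rule Max_ge) auto

lemma best_surplus_ge: "m \<in> {1..M} \<Longrightarrow> v m j - b m \<le> best_surplus M v b j"
  unfolding best_surplus_def by (rule Max_ge) auto

lemma best_surplus_le_eps_demands: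
  "eps_demands M v eps b m j \<Longrightarrow> best_surplus M v b j \<le> v m j - b m + eps"
  unfolding best_surplus_def eps_demands_def by (subst Max_le_iff) auto

locale dma_terminal = dma_invariant +
  assumes eps_nonneg: "0 \<le> eps"
    and positive_bid_matched: "\<lbrakk>m \<in> {1..M}; 0 < dma_beta s m\<rbrakk> \<Longrightarrow> dma_mu s m \<noteq> 0"
    and unmatched_unwanted:
      "\<lbrakk>k \<in> {1..N}; d2d_unmatched M s k; m \<in> {1..M}\<rbrakk> \<Longrightarrow> v m k - dma_beta s m < 0"

lemma dma_output_terminal:
  assumes out: "dma_output M N v eps s" and eps: "0 \<le> eps"
    and no_ties: "\<And>s'. dma_reach M N v eps s' \<Longrightarrow> no_ties M N v (dma_beta s')"
  shows "dma_terminal M N v eps s"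
proof -
  obtain s0 where s0: "dma_reach M N v eps s0" "\<not> has_proposal M N v s0" "dma_iter M N v eps s0 s"
    using out unfolding dma_output_def by blast
  obtain sel where sel: "\<forall>m\<in>fallback_cus M N v s0. sel m \<in> {1..N} \<and> dma_gprev s0 m (sel m)"
    and s: "s = dma_next M N v eps s0 sel"
    using s0(3) dma_iter_iff by blast
  interpret dma_iteration M N v eps s0 sel
    using dma_reach_invariant[OF s0(1) eps no_ties] eps no_ties[OF s0(1)] sel
    by (intro dma_iteration.intro dma_iteration_axioms.intro) auto
  show ?thesis
    unfolding s
    using next_invariant eps no_proposal_positive_bid_matched[OF s0(2)]
      no_proposal_unmatched_unwanted[OF s0(2)]
    by (intro dma_terminal.intro dma_terminal_axioms.intro) auto
qed

context dma_terminal
begin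

abbreviation "\<mu> \<equiv> dma_mu s"
abbreviation "\<beta> \<equiv> dma_beta s"
abbreviation "p \<equiv> dma_price s"
abbreviation "\<delta> \<equiv> dma_delta M v s"

definition matched :: "nat set" where
  "matched = {m \<in> {1..M}. \<mu> m \<noteq> 0}"

text \<open>Unmatched CUs may keep a stale \<open>dma_price\<close>; \<open>charged\<close> is the price vector of the output
  matching, which vanishes on unmatched CUs.\<close>

definition charged :: "nat \<Rightarrow> real" where
  "charged m = (if \<mu> m \<noteq> 0 then p m else 0)"

definition matched_value :: real where
  "matched_value = (\<Sum>m\<in>matched. v m (\<mu> m))"

lemma delta_partner:
  assumes m: "m \<in> {1..M}" "\<mu> m \<noteq> 0"
  shows "\<delta> (\<mu> m) = v m (\<mu> m) - p m"
proof -
  have "(SOME m'. m' \<in> {1..M} \<and> \<mu> m' = \<mu> m) = m"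
  proof (rule some_equality)
    show "m \<in> {1..M} \<and> \<mu> m = \<mu> m" using m by simp
    fix m' assume "m' \<in> {1..M} \<and> \<mu> m' = \<mu> m"
    then show "m' = m" using partner_inj[of m' m] m by simp
  qed
  moreover have "\<exists>m'\<in>{1..M}. \<mu> m' = \<mu> m" using m by blast
  ultimately show ?thesis unfolding dma_delta_def Let_def by simp
qed

lemma delta_unmatched: "d2d_unmatched M s k \<Longrightarrow> \<delta> k = 0"
  unfolding dma_delta_def d2d_unmatched_def by auto

lemma delta_ge:
  assumes m: "m \<in> {1..M}" and k: "k \<in> {1..N}"
  shows "v m k - \<beta> m \<le> \<delta> k"
proof (cases "d2d_unmatched M s k")
  case True
  then show ?thesis using unmatched_unwanted[OF k True m] delta_unmatched by simp
next
  case False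
  then obtain m0 where m0: "m0 \<in> {1..M}" "\<mu> m0 = k" unfolding d2d_unmatched_def by blast
  then have "\<mu> m0 \<noteq> 0" using k by auto
  then show ?thesis using delta_partner[OF m0(1)] partner_demands[OF m0(1)] m m0(2) by auto
qed

lemma delta_nonneg:
  assumes k: "k \<in> {1..N}"
  shows "0 \<le> \<delta> k"
proof (cases "d2d_unmatched M s k")
  case True
  then show ?thesis using delta_unmatched by simp
next
  case False
  then obtain m0 where m0: "m0 \<in> {1..M}" "\<mu> m0 = k" unfolding d2d_unmatched_def by blast
  then have "\<mu> m0 \<noteq> 0" using k by auto
  then show ?thesis using delta_partner[OF m0(1)] partner_demands[OF m0(1)] m0(2) by auto
qed

lemma charged_bounds:
  assumes m: "m \<in> {1..M}"
  shows "0 \<le> charged m \<and> charged m \<le> \<beta> m \<and> \<beta> m \<le> charged m + eps"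
proof (cases "\<mu> m = 0")
  case True
  then have "\<beta> m = 0" using positive_bid_matched[OF m] bid_bounds[OF m] by force
  then show ?thesis using True eps_nonneg unfolding charged_def by simp
next
  case False
  then show ?thesis using price_bounds[OF m] unfolding charged_def by simp
qed

lemma dual_feasible: "\<lbrakk>m \<in> {1..M}; k \<in> {1..N}\<rbrakk> \<Longrightarrow> v m k \<le> \<delta> k + charged m + eps"
  using delta_ge charged_bounds by fastforce

lemma Vopt_le_dual_value:
  assumes "B \<subseteq> {1..N}"
  shows "Vopt v {1..M} B \<le> sum \<delta> B + sum charged {1..M} + real (min M (card B)) * eps"
proof -
  have "Vopt v {1..M} B \<le> sum \<delta> B + sum charged {1..M} + real (min (card {1..M}) (card B)) * eps"
  proof (rule Vopt_le_dual)
    show "finite B" using assms finite_subset by blast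
    show "v m k \<le> \<delta> k + charged m + eps" if "m \<in> {1..M}" "k \<in> B" for m k
      using that assms dual_feasible by blast
    show "0 \<le> \<delta> k" if "k \<in> B" for k using delta_nonneg that assms by blast
    show "0 \<le> charged m" if "m \<in> {1..M}" for m using charged_bounds that by blast
  qed (use eps_nonneg in simp_all)
  then show ?thesis by simp
qed

lemma finite_matched: "finite matched"
  unfolding matched_def by simp

lemma matched_subset: "matched \<subseteq> {1..M}"
  unfolding matched_def by blast

lemma inj_on_matched: "inj_on \<mu> matched"
proof (rule inj_onI)
  fix x y assume "x \<in> matched" "y \<in> matched" "\<mu> x = \<mu> y"
  then show "x = y" using partner_inj[of x y] unfolding matched_def by simp
qed

lemma partners_subset: "\<mu> ` matched \<subseteq> {1..N}"
  unfolding matched_def using partner_range by fastforce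

lemma sum_delta: "sum \<delta> {1..N} = (\<Sum>m\<in>matched. v m (\<mu> m) - p m)"
proof -
  have "sum \<delta> {1..N} = sum \<delta> (\<mu> ` matched)"
  proof (rule sum.mono_neutral_right)
    show "\<forall>k\<in>{1..N} - \<mu> ` matched. \<delta> k = 0"
    proof
      fix k assume k: "k \<in> {1..N} - \<mu> ` matched"
      then have "d2d_unmatched M s k" unfolding d2d_unmatched_def matched_def by force
      then show "\<delta> k = 0" by (rule delta_unmatched)
    qed
  qed (use partners_subset in auto)
  also have "\<dots> = (\<Sum>m\<in>matched. \<delta> (\<mu> m))"
    using sum.reindex[OF inj_on_matched] by simp
  also have "\<dots> = (\<Sum>m\<in>matched. v m (\<mu> m) - p m)"
    by (rule sum.cong) (auto simp: matched_def delta_partner)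
  finally show ?thesis .
qed

lemma sum_charged: "sum charged {1..M} = (\<Sum>m\<in>matched. p m)"
proof -
  have "(\<Sum>m\<in>matched. p m) = (\<Sum>m\<in>{1..M}. if \<mu> m \<noteq> 0 then p m else 0)"
    unfolding matched_def by (rule sum.inter_filter) simp
  then show ?thesis unfolding charged_def by simp
qed

lemma sum_delta_add_charged: "sum \<delta> {1..N} + sum charged {1..M} = matched_value"
  unfolding sum_delta sum_charged matched_value_def by (simp add: sum_subtractf)

lemma matched_value_le_Vopt: "matched_value \<le> Vopt v {1..M} {1..N}"
  unfolding matched_value_def
  using sum_assignment_le_Vopt[of "{1..M}" "{1..N}" matched \<mu> v] matched_subset partners_subset
    inj_on_matched by simp

lemma delta_le_marginal:
  assumes n: "n \<in> {1..N}"
  shows "\<delta> n \<le> Vopt v {1..M} {1..N} - Vopt v {1..M} ({1..N} - {n}) + real (min M (N - 1)) * eps"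
proof -
  have "Vopt v {1..M} ({1..N} - {n}) \<le>
      sum \<delta> ({1..N} - {n}) + sum charged {1..M} + real (min M (N - 1)) * eps"
    using Vopt_le_dual_value[of "{1..N} - {n}"] n by simp
  moreover have "sum \<delta> ({1..N} - {n}) = sum \<delta> {1..N} - \<delta> n"
    using n by (simp add: sum_diff1)
  ultimately show ?thesis using sum_delta_add_charged matched_value_le_Vopt by linarith
qed

lemma Vopt_le_matched_value: "Vopt v {1..M} {1..N} \<le> matched_value + real (min M N) * eps"
  using Vopt_le_dual_value[of "{1..N}"] sum_delta_add_charged by simp

lemma matched_value_sub_delta:
  assumes n: "n \<in> {1..N}"
  shows "matched_value - \<delta> n =
    (\<Sum>m\<in>{m \<in> matched. \<mu> m \<noteq> n}. v m (\<mu> m)) + (\<Sum>m\<in>{m \<in> matched. \<mu> m = n}. p m)"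
proof -
  have fin: "finite {m \<in> matched. \<mu> m \<noteq> n}" "finite {m \<in> matched. \<mu> m = n}"
    using finite_matched by simp_all
  have "matched_value = (\<Sum>m\<in>{m \<in> matched. \<mu> m \<noteq> n} \<union> {m \<in> matched. \<mu> m = n}. v m (\<mu> m))"
    unfolding matched_value_def by (rule sum.cong) auto
  also have "\<dots> = (\<Sum>m\<in>{m \<in> matched. \<mu> m \<noteq> n}. v m (\<mu> m)) +
      (\<Sum>m\<in>{m \<in> matched. \<mu> m = n}. v m (\<mu> m))"
    by (rule sum.union_disjoint[OF fin]) auto
  finally have split: "matched_value = (\<Sum>m\<in>{m \<in> matched. \<mu> m \<noteq> n}. v m (\<mu> m)) +
      (\<Sum>m\<in>{m \<in> matched. \<mu> m = n}. v m (\<mu> m))" .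
  show ?thesis
  proof (cases "\<exists>m1\<in>matched. \<mu> m1 = n")
    case True
    then obtain m1 where m1: "m1 \<in> matched" "\<mu> m1 = n" by blast
    have "m = m1" if "m \<in> matched" "\<mu> m = n" for m
      using partner_inj[of m m1] that m1 unfolding matched_def by simp
    then have "{m \<in> matched. \<mu> m = n} = {m1}" using m1 by blast
    moreover have "\<delta> n = v m1 n - p m1" using delta_partner m1 unfolding matched_def by auto
    ultimately show ?thesis using split m1(2) by simp
  next
    case False
    then have none: "{m \<in> matched. \<mu> m = n} = {}" by blast
    have "d2d_unmatched M s n"
      using False n unfolding d2d_unmatched_def matched_def by auto
    then show ?thesis using split delta_unmatched unfolding none by simp
  qed
qed

lemma matched_value_sub_delta_le:
  assumes n: "n \<in> {1..N}"
  shows "matched_value - \<delta> n \<le> sum (best_surplus M v \<beta>) (\<mu> ` matched - {n}) + sum \<beta> {1..M}"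
proof -
  define T where "T = {m \<in> matched. \<mu> m \<noteq> n}"
  have T: "T \<subseteq> matched" "finite T" using finite_matched unfolding T_def by auto
  have rest: "{m \<in> matched. \<mu> m = n} = matched - T" unfolding T_def by blast
  have "matched_value - \<delta> n = (\<Sum>m\<in>T. v m (\<mu> m)) + (\<Sum>m\<in>matched - T. p m)"
    using matched_value_sub_delta[OF n] unfolding rest T_def .
  also have "\<dots> \<le> (\<Sum>m\<in>T. best_surplus M v \<beta> (\<mu> m) + \<beta> m) + (\<Sum>m\<in>matched - T. \<beta> m)"
  proof (rule add_mono; rule sum_mono)
    fix m assume "m \<in> T"
    then show "v m (\<mu> m) \<le> best_surplus M v \<beta> (\<mu> m) + \<beta> m"
      using best_surplus_ge[of m M v "\<mu> m" \<beta>] T(1) matched_subset by auto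
  next
    fix m assume "m \<in> matched - T"
    then show "p m \<le> \<beta> m" using price_bounds unfolding matched_def by blast
  qed
  also have "\<dots> = sum (best_surplus M v \<beta>) (\<mu> ` T) + sum \<beta> matched"
  proof -
    have "sum (best_surplus M v \<beta>) (\<mu> ` T) = (\<Sum>m\<in>T. best_surplus M v \<beta> (\<mu> m))"
      by (rule sum.reindex_cong[OF inj_on_subset[OF inj_on_matched T(1)]]) simp_all
    moreover have "sum \<beta> matched = sum \<beta> T + sum \<beta> (matched - T)"
      using sum.subset_diff[OF T(1) finite_matched, of \<beta>] by simp
    ultimately show ?thesis by (simp add: sum.distrib)
  qed
  also have "\<dots> \<le> sum (best_surplus M v \<beta>) (\<mu> ` matched - {n}) + sum \<beta> {1..M}"
  proof -
    have "\<mu> ` T = \<mu> ` matched - {n}" unfolding T_def by blast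
    moreover have "sum \<beta> matched \<le> sum \<beta> {1..M}"
      using matched_subset bid_bounds by (intro sum_mono2) force+
    ultimately show ?thesis by simp
  qed
  finally show ?thesis .
qed

definition exchange :: "nat \<Rightarrow> nat \<Rightarrow> nat \<Rightarrow> bool" where
  "exchange n m m' \<longleftrightarrow> m' \<in> {1..M} \<and> \<mu> m' \<noteq> 0 \<and> \<mu> m' \<noteq> n \<and> eps_demands M v eps \<beta> m (\<mu> m')"

definition free_demand :: "nat \<Rightarrow> nat \<Rightarrow> nat \<Rightarrow> bool" where
  "free_demand n m j \<longleftrightarrow>
     j \<in> {1..N} - {n} \<and> eps_demands M v eps \<beta> m j \<and> (\<forall>m'\<in>{1..M}. \<mu> m' \<noteq> j)"

text \<open>If no CU reachable from \<open>m1\<close> had zero bid or a free demanded D2D pair, the reachable CUs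
  would demand only their own partners and \<open>n\<close>, violating the surplus condition.\<close>

lemma exchange_path_to_exit:
  assumes m1: "m1 \<in> {1..M}" "\<mu> m1 = n"
  shows "\<exists>a. (exchange n)\<^sup>*\<^sup>* m1 a \<and> (\<not> 0 < \<beta> a \<or> (\<exists>j. free_demand n a j))"
proof (rule ccontr)
  assume no_exit: "\<not> ?thesis"
  define R where "R = {a. (exchange n)\<^sup>*\<^sup>* m1 a}"
  have R_cu: "R \<subseteq> {1..M}"
  proof
    fix a assume "a \<in> R"
    then have "(exchange n)\<^sup>*\<^sup>* m1 a" unfolding R_def by simp
    then show "a \<in> {1..M}"
      by (induction rule: rtranclp_induct) (use m1 in \<open>auto simp: exchange_def\<close>)
  qed
  have m1R: "m1 \<in> R" unfolding R_def by simp
  have finR: "finite R" using R_cu finite_subset by blast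
  have R_pos: "\<forall>a\<in>R. 0 < \<beta> a" using no_exit unfolding R_def by blast
  define G where "G = {j \<in> {1..N}. \<exists>a\<in>R. eps_demands M v eps \<beta> a j}"
  have "G \<subseteq> \<mu> ` R"
  proof
    fix j assume "j \<in> G"
    then obtain a where a: "a \<in> R" "j \<in> {1..N}" "eps_demands M v eps \<beta> a j" unfolding G_def by blast
    show "j \<in> \<mu> ` R"
    proof (cases "j = n")
      case True
      then show ?thesis using m1 m1R by force
    next
      case False
      then have "\<not> free_demand n a j" using no_exit a(1) unfolding R_def by blast
      then obtain m where m: "m \<in> {1..M}" "\<mu> m = j"
        using a False unfolding free_demand_def by blast
      then have "exchange n a m" using a False unfolding exchange_def by auto
      then have "m \<in> R" using a(1) unfolding R_def by (simp add: rtranclp.rtrancl_into_rtrancl)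
      then show ?thesis using m(2) by blast
    qed
  qed
  then have "card G \<le> card R"
    using card_mono[OF finite_imageI[OF finR]] card_image_le[OF finR, of \<mu>] by (meson order_trans)
  moreover have "card R + 1 \<le> card G"
    unfolding G_def using surplus[OF R_cu _ R_pos] m1R by blast
  ultimately show False by linarith
qed

lemma inj_on_nonzero_partner: "inj_on \<mu> {m \<in> {1..M}. \<mu> m \<noteq> 0}"
  using inj_on_matched unfolding matched_def .

end

locale exchange_path = dma_terminal +
  fixes n m1 a d :: nat and xs :: "nat list"
  assumes m1: "m1 \<in> {1..M}" "dma_mu s m1 = n"
    and path: "rtrancl_path (exchange n) m1 xs a" and dist: "distinct (m1 # xs)"
    and d: "d = 0 \<or> free_demand n a d" and d_pos: "0 < dma_beta s a \<Longrightarrow> free_demand n a d"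
begin

abbreviation "\<phi> \<equiv> shift_path \<mu> d m1 xs"

lemma path_targets: "y \<in> set xs \<Longrightarrow> y \<in> {1..M} \<and> \<mu> y \<noteq> 0 \<and> \<mu> y \<noteq> n"
  using rtrancl_path_targets[OF path] unfolding exchange_def by blast

lemma path_subset: "set (m1 # xs) \<subseteq> {1..M}"
  using path_targets m1 by auto

lemma shifted_on_path:
  "m \<in> set (m1 # xs) \<Longrightarrow> (m = a \<and> \<phi> m = d) \<or> (\<exists>y\<in>set xs. exchange n m y \<and> \<phi> m = \<mu> y)"
  by (rule shift_path_on_path[OF path dist])

lemma shifted_range:
  assumes m: "m \<in> {1..M}" "\<phi> m \<noteq> 0"
  shows "\<phi> m \<in> {1..N} - {n} \<and> eps_demands M v eps \<beta> m (\<phi> m)"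
proof (cases "m \<in> set (m1 # xs)")
  case True
  then show ?thesis
    using shifted_on_path[OF True] d m(2) path_targets partner_range
    unfolding free_demand_def exchange_def by fastforce
next
  case False
  then have off: "\<phi> m = \<mu> m" "m \<noteq> m1" by (simp_all add: shift_path_outside)
  then have "\<mu> m \<noteq> n" using partner_inj[OF m(1) m1(1)] m1(2) m(2) by auto
  then show ?thesis
    using off m partner_range[OF m(1)] partner_eps_demands[OF m(1)] by auto
qed

lemma inj_on_shifted: "inj_on \<phi> {m \<in> {1..M}. \<phi> m \<noteq> 0}"
proof (rule inj_on_nonzero_shift_path[OF dist path_subset inj_on_nonzero_partner])
  show "\<forall>y\<in>set xs. \<mu> y \<noteq> 0" using path_targets by blast
  show "d = 0 \<or> d \<notin> \<mu> ` {1..M}" using d unfolding free_demand_def by auto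
qed

lemma shifted_positive_bid:
  assumes m: "m \<in> {1..M}" "0 < \<beta> m"
  shows "\<phi> m \<noteq> 0"
proof (cases "m \<in> set (m1 # xs)")
  case True
  then show ?thesis
    using shifted_on_path[OF True] d_pos m(2) unfolding free_demand_def exchange_def by force
next
  case False
  then have "\<phi> m = \<mu> m" by (simp add: shift_path_outside)
  then show ?thesis using positive_bid_matched[OF m] by simp
qed

lemma partners_subset_shifted: "\<mu> ` matched - {n} \<subseteq> \<phi> ` {m \<in> {1..M}. \<phi> m \<noteq> 0}"
  using nonzero_image_shift_path[OF dist path_subset, of \<mu> d] m1(2) unfolding matched_def by simp

end

context dma_terminal
begin

lemma eps_assignment_avoiding:
  assumes n: "n \<in> {1..N}"
  obtains \<phi> where
    "\<And>m. \<lbrakk>m \<in> {1..M}; \<phi> m \<noteq> 0\<rbrakk> \<Longrightarrow> \<phi> m \<in> {1..N} - {n} \<and> eps_demands M v eps \<beta> m (\<phi> m)"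
    "inj_on \<phi> {m \<in> {1..M}. \<phi> m \<noteq> 0}"
    "\<And>m. \<lbrakk>m \<in> {1..M}; 0 < \<beta> m\<rbrakk> \<Longrightarrow> \<phi> m \<noteq> 0"
    "\<mu> ` matched - {n} \<subseteq> \<phi> ` {m \<in> {1..M}. \<phi> m \<noteq> 0}"
proof (cases "\<exists>m1\<in>{1..M}. \<mu> m1 = n")
  case False
  show ?thesis
  proof (rule that[of \<mu>])
    fix m assume m: "m \<in> {1..M}" "\<mu> m \<noteq> 0"
    then show "\<mu> m \<in> {1..N} - {n} \<and> eps_demands M v eps \<beta> m (\<mu> m)"
      using False partner_range[OF m(1)] partner_eps_demands[OF m] by auto
  qed (use inj_on_nonzero_partner positive_bid_matched in \<open>auto simp: matched_def\<close>)
next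
  case True
  then obtain m1 where m1: "m1 \<in> {1..M}" "\<mu> m1 = n" by blast
  obtain a where "(exchange n)\<^sup>*\<^sup>* m1 a" and exit: "\<not> 0 < \<beta> a \<or> (\<exists>j. free_demand n a j)"
    using exchange_path_to_exit[OF m1] by blast
  then obtain xs where path: "rtrancl_path (exchange n) m1 xs a" and dist: "distinct (m1 # xs)"
    by (metis rtranclp_eq_rtrancl_path rtrancl_path_distinct)
  from exit obtain d where d: "d = 0 \<or> free_demand n a d" "0 < \<beta> a \<Longrightarrow> free_demand n a d"
    by blast
  interpret exchange_path M N v eps s n m1 a d xs
    using m1 path dist d by unfold_locales simp_all
  show ?thesis
    using that shifted_range inj_on_shifted shifted_positive_bid partners_subset_shifted by blast
qed

lemma Vopt_avoiding_ge:
  assumes n: "n \<in> {1..N}"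
  shows "matched_value - \<delta> n - real (min M (N - 1)) * eps \<le> Vopt v {1..M} ({1..N} - {n})"
proof -
  obtain \<phi> where range: "\<And>m. \<lbrakk>m \<in> {1..M}; \<phi> m \<noteq> 0\<rbrakk> \<Longrightarrow>
        \<phi> m \<in> {1..N} - {n} \<and> eps_demands M v eps \<beta> m (\<phi> m)"
    and inj: "inj_on \<phi> {m \<in> {1..M}. \<phi> m \<noteq> 0}"
    and pos: "\<And>m. \<lbrakk>m \<in> {1..M}; 0 < \<beta> m\<rbrakk> \<Longrightarrow> \<phi> m \<noteq> 0"
    and covers: "\<mu> ` matched - {n} \<subseteq> \<phi> ` {m \<in> {1..M}. \<phi> m \<noteq> 0}"
    using eps_assignment_avoiding[OF n] by blast
  define S where "S = {m \<in> {1..M}. \<phi> m \<noteq> 0}"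
  have S: "S \<subseteq> {1..M}" "\<phi> ` S \<subseteq> {1..N} - {n}" "finite S"
    using range unfolding S_def by auto
  have "card S \<le> min M (N - 1)"
  proof -
    have "card S \<le> M" using card_mono[OF _ S(1)] by simp
    moreover have "card S = card (\<phi> ` S)" using card_image[OF inj] unfolding S_def by simp
    moreover have "card (\<phi> ` S) \<le> N - 1" using card_mono[OF _ S(2)] n by simp
    ultimately show ?thesis by simp
  qed
  then have card_eps: "real (card S) * eps \<le> real (min M (N - 1)) * eps"
    using eps_nonneg by (intro mult_right_mono) auto
  have "matched_value - \<delta> n \<le> sum (best_surplus M v \<beta>) (\<mu> ` matched - {n}) + sum \<beta> {1..M}"
    using matched_value_sub_delta_le[OF n] .
  also have "\<dots> \<le> sum (best_surplus M v \<beta>) (\<phi> ` S) + sum \<beta> S"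
  proof (rule add_mono)
    show "sum (best_surplus M v \<beta>) (\<mu> ` matched - {n}) \<le> sum (best_surplus M v \<beta>) (\<phi> ` S)"
      using covers S(3) best_surplus_nonneg unfolding S_def by (intro sum_mono2) auto
    have "\<forall>m\<in>{1..M} - S. \<beta> m = 0"
      using pos bid_bounds unfolding S_def by force
    then show "sum \<beta> {1..M} \<le> sum \<beta> S"
      using sum.mono_neutral_left[OF _ S(1), of \<beta>] by simp
  qed
  also have "\<dots> = (\<Sum>m\<in>S. best_surplus M v \<beta> (\<phi> m) + \<beta> m)"
    using inj unfolding S_def by (simp add: sum.reindex sum.distrib)
  also have "\<dots> \<le> (\<Sum>m\<in>S. v m (\<phi> m) + eps)"
    using range best_surplus_le_eps_demands unfolding S_def by (intro sum_mono) force
  also have "\<dots> = (\<Sum>m\<in>S. v m (\<phi> m)) + real (card S) * eps"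
    by (simp add: sum.distrib)
  also have "(\<Sum>m\<in>S. v m (\<phi> m)) \<le> Vopt v {1..M} ({1..N} - {n})"
    using sum_assignment_le_Vopt[of "{1..M}" "{1..N} - {n}" S \<phi> v] S inj unfolding S_def by simp
  finally show ?thesis using card_eps by linarith
qed

lemma delta_bounds:
  assumes n: "n \<in> {1..N}"
  shows "\<delta> n \<le> Vopt v {1..M} {1..N} - Vopt v {1..M} ({1..N} - {n}) + real (min M (N - 1)) * eps"
    and "Vopt v {1..M} {1..N} - Vopt v {1..M} ({1..N} - {n}) - (real (min M (N - 1)) + real (min M N)) * eps
      \<le> \<delta> n"
  using delta_le_marginal[OF n] Vopt_le_matched_value Vopt_avoiding_ge[OF n]
  by (simp_all add: algebra_simps)

end

theorem lemma1:
  fixes M N :: nat and v :: "nat \<Rightarrow> nat \<Rightarrow> real" and eps :: real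
    and s :: dma_state and n :: nat
  assumes "eps > 0"
    and "\<And>s'. dma_reach M N v eps s' \<Longrightarrow> no_ties M N v (dma_beta s')"
    and "dma_output M N v eps s"
    and "n \<in> {1..N}"
  shows "dma_delta M v s n \<le> Vopt v {1..M} {1..N} - Vopt v {1..M} ({1..N} - {n})
            + 4 * real (min M (N - 1)) * eps \<and>
         dma_delta M v s n \<ge> Vopt v {1..M} {1..N} - Vopt v {1..M} ({1..N} - {n})
            - (real (min M (N - 1)) + real (min M N) + 1) * eps"
proof -
  interpret dma_terminal M N v eps s
    using dma_output_terminal assms(1-3) by simp
  have "real (min M (N - 1)) * eps \<le> 4 * real (min M (N - 1)) * eps"
    and "(real (min M (N - 1)) + real (min M N)) * eps \<le> (real (min M (N - 1)) + real (min M N) + 1) * eps"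
    using assms(1) by (simp_all add: algebra_simps)
  then show ?thesis using delta_bounds[OF assms(4)] by linarith
qed

end
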